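(* Let $\psi:\mathbb{R}^d\to(-\infty,\infty]$ be proper, closed, convex, bounded from below with $\int e^{-\psi}<\infty$; fix $\lambda>0$ and let $\pi^\lambda(x)\propto e^{-\psi^\lambda(x)}$. Assume $$\limsup_{\|x\|\to\infty}\frac{\|\mathrm{prox}^\lambda_\psi(x)\|}{\|x\|}=l<1.$$ Consider the MALA chain targeting $\pi^\lambda$ with step size $h>0$: from $x$, propose $y\sim q_M(x,\cdot)$, the density of $N(c(x),h\mathbb I_d)$ with $c(x)=x-\frac h2\nabla\psi^\lambda(x)$, and accept with probability $\min\{1,\pi^\lambda(y)q_M(y,x)/(\pi^\lambda(x)q_M(x,y))\}$. Let $A(x)=\{y:\pi^\lambda(y)q_M(y,x)\ge \pi^\lambda(x)q_M(x,y)\}$ and $I(x)=\{y:\|y\|\le\|x\|\}$, and assume $A(\cdot)$ converges inwards in $q_M$, i.e. $\lim_{\|x\|\to\infty}\int_{A(x)\,\Delta\, I(x)}q_M(x,y)\,dy=0$, where $\Delta$ is symmetric difference. Then if $h\le 2\lambda$, the $\pi^\lambda$-MALA chain is geometrically ergodic.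
   Context: Moreau-Yosida envelope: $\psi^\lambda(x)=\inf_y\{\psi(y)+\frac1{2\lambda}\|y-x\|^2\}$; proximal mapping: $\mathrm{prox}^\lambda_\psi(x)=\arg\min_y\{\psi(y)+\frac1{2\lambda}\|y-x\|^2\}$ (unique). $\psi^\lambda$ is continuously differentiable with $\nabla\psi^\lambda(x)=\frac1\lambda(x-\mathrm{prox}^\lambda_\psi(x))$. *)

theory Defs
  imports "HOL-Analysis.Analysis"
begin

definition epigraph :: "('a \<Rightarrow> ereal) \<Rightarrow> ('a \<times> real) set" where
  "epigraph psi = {(x, t). psi x \<le> ereal t}"

definition proper_fun :: "('a \<Rightarrow> ereal) \<Rightarrow> bool" where
  "proper_fun psi \<longleftrightarrow> (\<exists>x. psi x < \<infinity>) \<and> (\<forall>x. psi x > -\<infinity>)"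

definition closed_fun :: "('a::topological_space \<Rightarrow> ereal) \<Rightarrow> bool" where
  "closed_fun psi \<longleftrightarrow> closed (epigraph psi)"

definition convex_fun :: "('a::real_vector \<Rightarrow> ereal) \<Rightarrow> bool" where
  "convex_fun psi \<longleftrightarrow> convex (epigraph psi)"

definition exp_neg :: "ereal \<Rightarrow> real" where
  "exp_neg v = (if v = \<infinity> then 0 else exp (- real_of_ereal v))"

definition moreau_env :: "real \<Rightarrow> ('a::real_normed_vector \<Rightarrow> ereal) \<Rightarrow> 'a \<Rightarrow> real" where
  "moreau_env lam psi x = real_of_ereal (INF y. psi y + ereal ((norm (y - x))\<^sup>2 / (2 * lam)))"

definition prox :: "real \<Rightarrow> ('a::real_normed_vector \<Rightarrow> ereal) \<Rightarrow> 'a \<Rightarrow> 'a" where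
  "prox lam psi x = (THE y. \<forall>z. psi y + ereal ((norm (y - x))\<^sup>2 / (2 * lam))
                                 \<le> psi z + ereal ((norm (z - x))\<^sup>2 / (2 * lam)))"

(* gradient of the Moreau envelope: (x - prox(x)) / lam *)
definition grad_env :: "real \<Rightarrow> ('a::real_normed_vector \<Rightarrow> ereal) \<Rightarrow> 'a \<Rightarrow> 'a" where
  "grad_env lam psi x = (1 / lam) *\<^sub>R (x - prox lam psi x)"

definition target_dens :: "real \<Rightarrow> ('a::euclidean_space \<Rightarrow> ereal) \<Rightarrow> 'a \<Rightarrow> real" where
  "target_dens lam psi x =
     exp (- moreau_env lam psi x) / (\<integral> z. exp (- moreau_env lam psi z) \<partial>lborel)"

definition target_measure :: "real \<Rightarrow> ('a::euclidean_space \<Rightarrow> ereal) \<Rightarrow> 'a measure" where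
  "target_measure lam psi = density lborel (\<lambda>x. ennreal (target_dens lam psi x))"

definition mala_q :: "real \<Rightarrow> ('a::euclidean_space \<Rightarrow> ereal) \<Rightarrow> real \<Rightarrow> 'a \<Rightarrow> 'a \<Rightarrow> real" where
  "mala_q lam psi h x y =
     (2 * pi * h) powr (- real DIM('a) / 2)
     * exp (- (norm (y - (x - (h / 2) *\<^sub>R grad_env lam psi x)))\<^sup>2 / (2 * h))"

definition mala_acc :: "real \<Rightarrow> ('a::euclidean_space \<Rightarrow> ereal) \<Rightarrow> real \<Rightarrow> 'a \<Rightarrow> 'a \<Rightarrow> real" where
  "mala_acc lam psi h x y =
     min 1 ((target_dens lam psi y * mala_q lam psi h y x) /
            (target_dens lam psi x * mala_q lam psi h x y))"

definition mala_op :: "real \<Rightarrow> ('a::euclidean_space \<Rightarrow> ereal) \<Rightarrow> real \<Rightarrow> ('a \<Rightarrow> real) \<Rightarrow> 'a \<Rightarrow> real" where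
  "mala_op lam psi h f x =
     (\<integral> y. mala_q lam psi h x y * mala_acc lam psi h x y * f y \<partial>lborel)
     + (1 - (\<integral> y. mala_q lam psi h x y * mala_acc lam psi h x y \<partial>lborel)) * f x"

definition mala_kernel_n :: "real \<Rightarrow> ('a::euclidean_space \<Rightarrow> ereal) \<Rightarrow> real \<Rightarrow> nat \<Rightarrow> 'a \<Rightarrow> 'a set \<Rightarrow> real" where
  "mala_kernel_n lam psi h n x A = ((mala_op lam psi h ^^ n) (indicator A)) x"

definition tv_dist :: "('a set \<Rightarrow> real) \<Rightarrow> 'a measure \<Rightarrow> real" where
  "tv_dist P M = (SUP A \<in> sets M. \<bar>P A - measure M A\<bar>)"

definition geometrically_ergodic :: "(nat \<Rightarrow> 'a \<Rightarrow> 'a set \<Rightarrow> real) \<Rightarrow> 'a measure \<Rightarrow> bool" where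
  "geometrically_ergodic Pn M \<longleftrightarrow>
     (\<exists>\<rho>::real. \<exists>C :: 'a \<Rightarrow> real. 0 \<le> \<rho> \<and> \<rho> < 1 \<and>
        (AE x in M. \<forall>n. tv_dist (Pn n x) M \<le> C x * \<rho> ^ n))"

end

theory Submission
  imports Defs "HOL-Probability.Distributions"
begin

(* Harris' theorem, in the form of Hairer and Mattingly: a drift condition P V <= gam V + K
   (gam < 1) together with a minorization on every sublevel set of V makes P a strict contraction
   of the weighted oscillation seminorm sup |f x - f y| / (2 + beta V x + beta V y); since MALA is
   reversible with respect to the target, this yields geometric convergence in total variation.

   Here V x = 1 + |x|. For large |x| we have |prox x| <= l' |x| with l < l' < 1, so the proposal
   center c(x) = (1 - h/(2 lam)) x + h/(2 lam) prox x satisfies |c(x)| <= kappa |x| with kappa < 1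
   (this is where h <= 2 lam enters), and the Moreau envelope grows quadratically, so the target
   has Gaussian tails. The inwards convergence of the acceptance region and Chebyshev's inequality
   for the Gaussian proposal make the rejection probability vanish at infinity, which gives the
   drift. The transition density q(x,y) a(x,y) is continuous and positive, hence bounded below on
   compact sets, which gives the minorization. *)

definition gauss_dens :: "real \<Rightarrow> 'a::euclidean_space \<Rightarrow> real" where
  "gauss_dens h z = (2 * pi * h) powr (- real DIM('a) / 2) * exp (- (norm z)\<^sup>2 / (2 * h))"

lemma norm_power2_eq_sum_Basis: "(norm (z::'a::euclidean_space))\<^sup>2 = (\<Sum>b\<in>Basis. (z \<bullet> b)\<^sup>2)"
  unfolding power2_norm_eq_inner by (subst euclidean_inner) (simp add: power2_eq_square)

lemma gauss_dens_eq_prod_normal_density: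
  assumes "h > 0"
  shows "gauss_dens h (z::'a::euclidean_space) = (\<Prod>b\<in>Basis. normal_density 0 (sqrt h) (z \<bullet> b))"
proof -
  have "(\<Prod>b\<in>Basis. normal_density 0 (sqrt h) (z \<bullet> b))
      = (\<Prod>b\<in>(Basis::'a set). (2*pi*h) powr (-1/2) * exp (- (z \<bullet> b)\<^sup>2 / (2 * h)))"
    using assms by (intro prod.cong refl) (simp add: normal_density_def powr_minus_divide powr_half_sqrt)
  also have "\<dots> = ((2*pi*h) powr (-1/2)) ^ DIM('a) * exp (\<Sum>b\<in>(Basis::'a set). - (z \<bullet> b)\<^sup>2 / (2 * h))"
    by (simp add: prod.distrib exp_sum)
  also have "((2*pi*h) powr (-1/2)) ^ DIM('a) = (2*pi*h) powr (- real DIM('a) / 2)"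
    using assms by (simp add: powr_realpow[symmetric] powr_powr)
  also have "(\<Sum>b\<in>(Basis::'a set). - (z \<bullet> b)\<^sup>2 / (2 * h)) = - (norm z)\<^sup>2 / (2 * h)"
    by (simp add: norm_power2_eq_sum_Basis sum_divide_distrib sum_negf)
  finally show ?thesis by (simp add: gauss_dens_def)
qed

lemma gauss_dens_pos: "h > 0 \<Longrightarrow> gauss_dens h z > 0"
  by (simp add: gauss_dens_def)

lemma continuous_on_gauss_dens [continuous_intros]:
  "h > 0 \<Longrightarrow> continuous_on S f \<Longrightarrow> continuous_on S (\<lambda>x. gauss_dens h (f x))"
  unfolding gauss_dens_def by (intro continuous_intros) auto

lemma borel_measurable_gauss_dens [measurable]: "gauss_dens h \<in> borel_measurable borel"
  unfolding gauss_dens_def by measurable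

lemma has_bochner_integral_gauss_dens:
  assumes "h > 0"
  shows "has_bochner_integral lborel (gauss_dens h :: 'a::euclidean_space \<Rightarrow> real) 1"
proof (rule has_bochner_integral_nn_integral)
  have "(\<integral>\<^sup>+x. ennreal (gauss_dens h (x::'a)) \<partial>lborel)
       = (\<integral>\<^sup>+x. (\<Prod>b\<in>Basis. ennreal (normal_density 0 (sqrt h) ((x::'a) \<bullet> b))) \<partial>lborel)"
    using assms by (intro nn_integral_cong) (simp add: gauss_dens_eq_prod_normal_density prod_ennreal)
  also have "\<dots> = (\<Prod>b\<in>(Basis::'a set). (\<integral>\<^sup>+x. ennreal (normal_density 0 (sqrt h) x) \<partial>lborel))"
    by (rule nn_integral_lborel_prod) auto
  also have "\<dots> = 1"
    using assms by (simp add: nn_integral_eq_integral)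
  finally show "(\<integral>\<^sup>+x. ennreal (gauss_dens h (x::'a)) \<partial>lborel) = ennreal 1" by simp
qed (use assms in \<open>auto intro: less_imp_le gauss_dens_pos\<close>)

lemma has_bochner_integral_gauss_dens_component_sq:
  assumes h: "h > 0" and b: "b \<in> (Basis::'a::euclidean_space set)"
  shows "has_bochner_integral lborel (\<lambda>z::'a. gauss_dens h z * (z \<bullet> b)\<^sup>2) h"
proof (rule has_bochner_integral_nn_integral)
  let ?f = "\<lambda>b' t. ennreal (normal_density 0 (sqrt h) t * (if b' = b then t\<^sup>2 else 1))"
  have "(\<integral>\<^sup>+x. ennreal (gauss_dens h x * (x \<bullet> b)\<^sup>2) \<partial>lborel)
       = (\<integral>\<^sup>+x. (\<Prod>b'\<in>Basis. ?f b' (x \<bullet> b')) \<partial>lborel)"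
  proof (intro nn_integral_cong)
    fix x :: 'a
    have "(\<Prod>b'\<in>Basis. normal_density 0 (sqrt h) (x \<bullet> b') * (if b' = b then (x \<bullet> b')\<^sup>2 else 1))
        = gauss_dens h x * (x \<bullet> b)\<^sup>2"
      using h b by (simp add: prod.distrib prod.delta gauss_dens_eq_prod_normal_density)
    then show "ennreal (gauss_dens h x * (x \<bullet> b)\<^sup>2) = (\<Prod>b'\<in>Basis. ?f b' (x \<bullet> b'))"
      by (subst prod_ennreal) auto
  qed
  also have "\<dots> = (\<Prod>b'\<in>(Basis::'a set). (\<integral>\<^sup>+x. ?f b' x \<partial>lborel))"
    by (rule nn_integral_lborel_prod) auto
  also have "\<dots> = (\<Prod>b'\<in>(Basis::'a set). (if b' = b then ennreal h else 1))"
  proof (intro prod.cong refl)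
    have "has_bochner_integral lborel (\<lambda>x. normal_density 0 (sqrt h) x * (x - 0) ^ (2 * 1))
            (fact (2 * 1) / ((2 / (sqrt h)\<^sup>2)^1 * fact 1))"
      by (rule normal_moment_even) (use h in auto)
    then have "has_bochner_integral lborel (\<lambda>x. normal_density 0 (sqrt h) x * x\<^sup>2) h"
      using h by simp
    then have "(\<integral>\<^sup>+x. ennreal (normal_density 0 (sqrt h) x * x\<^sup>2) \<partial>lborel) = ennreal h"
      by (subst nn_integral_eq_integral) (auto simp: has_bochner_integral_iff)
    then show "(\<integral>\<^sup>+x. ?f b' x \<partial>lborel) = (if b' = b then ennreal h else 1)" for b'
      using h by (simp add: nn_integral_eq_integral)
  qed
  also have "\<dots> = ennreal h" using b by (simp add: prod.delta)
  finally show "(\<integral>\<^sup>+x. ennreal (gauss_dens h x * (x \<bullet> b)\<^sup>2) \<partial>lborel) = ennreal h" .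
qed (use h in \<open>auto simp: less_imp_le[OF gauss_dens_pos[OF h]]\<close>)

lemma has_bochner_integral_gauss_dens_norm_sq:
  assumes "h > 0"
  shows "has_bochner_integral lborel (\<lambda>z::'a::euclidean_space. gauss_dens h z * (norm z)\<^sup>2) (real DIM('a) * h)"
proof -
  have "has_bochner_integral lborel (\<lambda>z::'a. \<Sum>b\<in>Basis. gauss_dens h z * (z \<bullet> b)\<^sup>2) (\<Sum>b\<in>(Basis::'a set). h)"
    by (intro has_bochner_integral_sum has_bochner_integral_gauss_dens_component_sq assms)
  then show ?thesis by (simp add: norm_power2_eq_sum_Basis sum_distrib_left)
qed

lemma lborel_integral_translate:
  fixes c :: "'a::euclidean_space" and f :: "'a \<Rightarrow> real"
  assumes [measurable]: "f \<in> borel_measurable borel"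
  shows "integrable lborel f \<longleftrightarrow> integrable lborel (\<lambda>z. f (c + z))"
    and "(\<integral>z. f z \<partial>lborel) = (\<integral>z. f (c + z) \<partial>lborel)"
proof -
  have "integrable lborel f \<longleftrightarrow> integrable (distr lborel borel ((+) c)) f"
    by (simp add: lborel_distr_plus)
  also have "\<dots> \<longleftrightarrow> integrable lborel (\<lambda>z. f (c + z))"
    by (rule integrable_distr_eq) auto
  finally show "integrable lborel f \<longleftrightarrow> integrable lborel (\<lambda>z. f (c + z))" .
  have "(\<integral>z. f z \<partial>lborel) = (\<integral>z. f z \<partial>distr lborel borel ((+) c))"
    by (simp add: lborel_distr_plus)
  also have "\<dots> = (\<integral>z. f (c + z) \<partial>lborel)"
    by (rule integral_distr) auto
  finally show "(\<integral>z. f z \<partial>lborel) = (\<integral>z. f (c + z) \<partial>lborel)" .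
qed

lemma closed_fun_le_lim:
  assumes "closed_fun f" "Y \<longlonglongrightarrow> y" "t \<longlonglongrightarrow> s" "\<And>n. f (Y n) \<le> ereal (t n)"
  shows "f y \<le> ereal s"
proof -
  have "(y, s) \<in> epigraph f"
  proof (rule closed_sequentially[of _ "\<lambda>n. (Y n, t n)"])
    show "closed (epigraph f)" using assms(1) by (simp add: closed_fun_def)
    show "(\<lambda>n. (Y n, t n)) \<longlonglongrightarrow> (y, s)" using assms(2,3) by (rule tendsto_Pair)
  qed (use assms(4) in \<open>auto simp: epigraph_def\<close>)
  then show ?thesis by (simp add: epigraph_def)
qed

lemma convex_fun_le_combination:
  assumes "convex_fun f" "f a \<le> ereal sa" "f b \<le> ereal sb" "0 \<le> t" "t \<le> 1"
  shows "f ((1 - t) *\<^sub>R a + t *\<^sub>R b) \<le> ereal ((1 - t) * sa + t * sb)"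
proof -
  have "(a, sa) \<in> epigraph f" "(b, sb) \<in> epigraph f"
    using assms by (auto simp: epigraph_def)
  from convexD[OF assms(1)[unfolded convex_fun_def] this, of "1 - t" t]
  have "(1 - t) *\<^sub>R (a, sa) + t *\<^sub>R (b, sb) \<in> epigraph f" using assms by auto
  then show ?thesis by (simp add: epigraph_def)
qed

locale moreau_setting =
  fixes psi :: "'a::euclidean_space \<Rightarrow> ereal" and lam m :: real
  assumes proper: "proper_fun psi"
    and closed: "closed_fun psi"
    and convex: "convex_fun psi"
    and lower: "\<And>x. ereal m \<le> psi x"
    and lam_pos: "lam > 0"
begin

definition prox_obj :: "'a \<Rightarrow> 'a \<Rightarrow> ereal" where
  "prox_obj x y = psi y + ereal ((norm (y - x))\<^sup>2 / (2 * lam))"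

lemma psi_finite: "psi y \<noteq> \<infinity> \<Longrightarrow> \<exists>s. psi y = ereal s \<and> m \<le> s"
  using lower[of y] by (cases "psi y") auto

lemma psi_finite_somewhere: obtains y0 b0 where "psi y0 = ereal b0"
  using proper psi_finite by (fastforce simp: proper_fun_def)

lemma prox_obj_real_if_le_finite:
  assumes "prox_obj x p \<le> prox_obj x y0" "psi y0 = ereal b0"
  obtains a where "psi p = ereal a" "m \<le> a"
proof -
  have "prox_obj x y0 < \<infinity>" using assms(2) by (simp add: prox_obj_def)
  with assms(1) have "prox_obj x p < \<infinity>" by (rule le_less_trans)
  then have "psi p \<noteq> \<infinity>" by (auto simp: prox_obj_def)
  then show thesis using psi_finite that by blast
qed

lemma norm_diff_le_if_prox_obj_le:
  assumes "prox_obj x y \<le> ereal c"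
  shows "norm (y - x) \<le> sqrt (2 * lam * (c - m))"
proof -
  have "psi y \<noteq> \<infinity>" using assms by (auto simp: prox_obj_def)
  then obtain s where "psi y = ereal s" "m \<le> s" using psi_finite by blast
  then have "(norm (y - x))\<^sup>2 / (2 * lam) \<le> c - m" using assms by (simp add: prox_obj_def)
  then have "(norm (y - x))\<^sup>2 \<le> 2 * lam * (c - m)" using lam_pos by (simp add: field_simps)
  then show ?thesis by (simp add: real_le_rsqrt)
qed

lemma prox_obj_has_minimizer: "\<exists>p. \<forall>z. prox_obj x p \<le> prox_obj x z"
proof -
  obtain y0 b0 where y0: "psi y0 = ereal b0" by (rule psi_finite_somewhere)
  define Ie where "Ie = (INF y. prox_obj x y)"
  have lower_Ie: "Ie \<le> prox_obj x z" for z unfolding Ie_def by (rule INF_lower) auto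
  have "ereal m \<le> Ie"
    unfolding Ie_def prox_obj_def using lower lam_pos
    by (intro INF_greatest) (metis add.right_neutral add_mono ereal_less_eq(5) divide_nonneg_pos
        zero_le_power2 zero_less_mult_iff zero_less_numeral)
  moreover have "Ie < \<infinity>" using lower_Ie[of y0] y0 by (auto simp: prox_obj_def)
  ultimately obtain I where I: "Ie = ereal I" by (cases Ie) auto
  have "\<forall>n. \<exists>y. prox_obj x y < ereal (I + inverse (real (Suc n)))"
  proof
    fix n
    have "Ie < ereal (I + inverse (real (Suc n)))" using I by simp
    then show "\<exists>y. prox_obj x y < ereal (I + inverse (real (Suc n)))"
      unfolding Ie_def by (auto simp: INF_less_iff)
  qed
  then obtain Y where Y: "\<And>n. prox_obj x (Y n) < ereal (I + inverse (real (Suc n)))" by metis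
  have "psi (Y n) \<noteq> \<infinity>" for n using Y[of n] by (auto simp: prox_obj_def)
  then have "\<forall>n. \<exists>s. psi (Y n) = ereal s" using psi_finite by blast
  then obtain s where s: "\<And>n. psi (Y n) = ereal (s n)" by metis
  have sY: "s n + (norm (Y n - x))\<^sup>2 / (2 * lam) < I + inverse (real (Suc n))" for n
    using Y[of n] s[of n] by (simp add: prox_obj_def)
  have "prox_obj x (Y n) \<le> ereal (I + 1)" for n
    using Y[of n] inverse_le_1_iff[of "real (Suc n)"] by (simp add: order_less_imp_le order.strict_trans2)
  then have "norm (Y n - x) \<le> sqrt (2 * lam * (I + 1 - m))" for n
    by (rule norm_diff_le_if_prox_obj_le)
  then have "bounded (range Y)"
    by (intro boundedI[where B = "norm x + sqrt (2 * lam * (I + 1 - m))"])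
      (metis (no_types, lifting) add.commute add_le_cancel_left imageE norm_triangle_sub order_trans)
  then obtain p r where r: "strict_mono r" and lim: "(Y \<circ> r) \<longlonglongrightarrow> p"
    using bounded_imp_convergent_subsequence by blast
  have "psi p \<le> ereal (I + 0 - (norm (p - x))\<^sup>2 / (2 * lam))"
  proof (rule closed_fun_le_lim[OF closed lim])
    show "(\<lambda>n. I + inverse (real (Suc (r n))) - (norm ((Y \<circ> r) n - x))\<^sup>2 / (2 * lam))
            \<longlonglongrightarrow> I + 0 - (norm (p - x))\<^sup>2 / (2 * lam)"
      using LIMSEQ_subseq_LIMSEQ[OF LIMSEQ_inverse_real_of_nat r] lim lam_pos
      by (intro tendsto_intros) (auto simp: comp_def)
    show "psi ((Y \<circ> r) n) \<le> ereal (I + inverse (real (Suc (r n))) - (norm ((Y \<circ> r) n - x))\<^sup>2 / (2 * lam))" for n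
      using sY[of "r n"] s[of "r n"] by simp
  qed
  then have "psi p \<le> ereal (I - (norm (p - x))\<^sup>2 / (2 * lam))" by simp
  then have "prox_obj x p \<le> ereal (I - (norm (p - x))\<^sup>2 / (2 * lam)) + ereal ((norm (p - x))\<^sup>2 / (2 * lam))"
    unfolding prox_obj_def by (rule add_right_mono)
  then have "prox_obj x p \<le> Ie" using I by simp
  then show ?thesis using lower_Ie order_trans by blast
qed

lemma norm_midpoint_power2:
  fixes u v :: "'b::real_inner"
  shows "(norm ((1/2) *\<^sub>R u + (1/2) *\<^sub>R v))\<^sup>2 = ((norm u)\<^sup>2 + (norm v)\<^sup>2) / 2 - (norm (u - v))\<^sup>2 / 4"
  by (simp add: power2_norm_eq_inner inner_add_left inner_add_right inner_diff_left inner_diff_right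
      inner_commute field_simps)

lemma prox_obj_minimizer_unique:
  assumes p: "\<forall>z. prox_obj x p \<le> prox_obj x z" and q: "\<forall>z. prox_obj x q \<le> prox_obj x z"
  shows "p = q"
proof -
  obtain y0 b0 where y0: "psi y0 = ereal b0" by (rule psi_finite_somewhere)
  obtain a where a: "psi p = ereal a" using prox_obj_real_if_le_finite p y0 by blast
  obtain b where b: "psi q = ereal b" using prox_obj_real_if_le_finite q y0 by blast
  have eq: "a + (norm (p - x))\<^sup>2 / (2 * lam) = b + (norm (q - x))\<^sup>2 / (2 * lam)"
    using p[rule_format, of q] q[rule_format, of p] a b by (simp add: prox_obj_def)
  define c where "c = (1 - 1/2) *\<^sub>R p + (1/2) *\<^sub>R q"
  have "psi c \<le> ereal ((1 - 1/2) * a + 1/2 * b)"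
    unfolding c_def by (rule convex_fun_le_combination[OF convex]) (use a b in auto)
  then have "prox_obj x c \<le> ereal ((1 - 1/2) * a + 1/2 * b) + ereal ((norm (c - x))\<^sup>2 / (2 * lam))"
    unfolding prox_obj_def by (rule add_right_mono)
  with p have "prox_obj x p \<le> ereal ((1 - 1/2) * a + 1/2 * b + (norm (c - x))\<^sup>2 / (2 * lam))"
    by (metis order_trans plus_ereal.simps(1))
  then have "a + (norm (p - x))\<^sup>2 / (2 * lam) \<le> (1 - 1/2) * a + 1/2 * b + (norm (c - x))\<^sup>2 / (2 * lam)"
    using a by (simp add: prox_obj_def)
  moreover have "c - x = (1/2) *\<^sub>R (p - x) + (1/2) *\<^sub>R (q - x)"
    unfolding c_def by (simp add: algebra_simps flip: scaleR_add_left)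
  then have nc: "(norm (c - x))\<^sup>2 = ((norm (p - x))\<^sup>2 + (norm (q - x))\<^sup>2) / 2 - (norm (p - q))\<^sup>2 / 4"
    using norm_midpoint_power2[of "p - x" "q - x"] by simp
  have "(norm (c - x))\<^sup>2 / (2 * lam)
      = ((norm (p - x))\<^sup>2 / (2 * lam) + (norm (q - x))\<^sup>2 / (2 * lam)) / 2 - (norm (p - q))\<^sup>2 / (8 * lam)"
    unfolding nc using lam_pos by (simp add: field_simps)
  moreover have "D \<le> 0"
    if "a + P \<le> (1 - 1/2) * a + 1/2 * b + C" "C = (P + Q) / 2 - D" "a + P = b + Q" for P Q C D :: real
    using that by (simp add: field_simps)
  ultimately have "(norm (p - q))\<^sup>2 / (8 * lam) \<le> 0"
    using eq by blast
  then show ?thesis using lam_pos by (simp add: divide_le_0_iff)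
qed

lemma prox_minimizes: "prox_obj x (prox lam psi x) \<le> prox_obj x z"
proof -
  have "\<exists>!p. \<forall>z. prox_obj x p \<le> prox_obj x z"
    using prox_obj_has_minimizer[of x] prox_obj_minimizer_unique[of x] by blast
  then have "\<forall>z. prox_obj x (prox lam psi x) \<le> prox_obj x z"
    unfolding prox_def prox_obj_def[symmetric] by (rule theI')
  then show ?thesis ..
qed

definition prox_val :: "'a \<Rightarrow> real" where
  "prox_val x = real_of_ereal (psi (prox lam psi x))"

lemma psi_prox: "psi (prox lam psi x) = ereal (prox_val x)" and prox_val_ge: "m \<le> prox_val x"
proof -
  obtain y0 b0 where y0: "psi y0 = ereal b0" by (rule psi_finite_somewhere)
  obtain a where "psi (prox lam psi x) = ereal a" "m \<le> a"
    using prox_obj_real_if_le_finite[OF prox_minimizes y0] .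
  then show "psi (prox lam psi x) = ereal (prox_val x)" "m \<le> prox_val x"
    by (simp_all add: prox_val_def)
qed

lemma moreau_env_eq: "moreau_env lam psi x = prox_val x + (norm (prox lam psi x - x))\<^sup>2 / (2 * lam)"
proof -
  have "(INF y. prox_obj x y) = prox_obj x (prox lam psi x)"
    using prox_minimizes[of x] by (intro antisym INF_lower INF_greatest) auto
  then show ?thesis unfolding moreau_env_def prox_obj_def[symmetric] by (simp add: prox_obj_def psi_prox)
qed

lemma moreau_env_le: "psi z = ereal b \<Longrightarrow> moreau_env lam psi x \<le> b + (norm (z - x))\<^sup>2 / (2 * lam)"
  using prox_minimizes[of x z] by (simp add: prox_obj_def moreau_env_eq psi_prox)

lemma moreau_env_ge: "m \<le> moreau_env lam psi x"
proof -
  have "0 \<le> (norm (prox lam psi x - x))\<^sup>2 / (2 * lam)" using lam_pos by simp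
  then show ?thesis using prox_val_ge[of x] by (simp add: moreau_env_eq)
qed

lemma prox_variational_ineq:
  assumes z: "psi z = ereal b"
  shows "lam * (prox_val x - b) \<le> inner (prox lam psi x - x) (z - prox lam psi x)"
proof (rule ccontr)
  define p where "p = prox lam psi x"
  define a where "a = prox_val x"
  define ip where "ip = inner (p - x) (z - p)"
  define D where "D = (norm (z - p))\<^sup>2"
  have a: "psi p = ereal a" using psi_prox unfolding p_def a_def by auto
  assume "\<not> ?thesis"
  then have e: "lam * (a - b) - ip > 0" unfolding a_def ip_def p_def by simp
  \<comment> \<open>moving from \<open>p\<close> towards \<open>z\<close> by a small step \<open>t\<close> would decrease the prox objective\<close>
  define t where "t = min 1 ((lam * (a - b) - ip) / (D + 1))"
  have D0: "D \<ge> 0" unfolding D_def by simp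
  have t0: "t > 0" using e D0 unfolding t_def by auto
  have tD: "t * D < lam * (a - b) - ip"
  proof -
    have "t * D \<le> ((lam * (a - b) - ip) / (D + 1)) * D" unfolding t_def
      using D0 by (intro mult_right_mono) auto
    also have "\<dots> < lam * (a - b) - ip" using e D0 by (simp add: field_simps)
    finally show ?thesis .
  qed
  define pt where "pt = (1 - t) *\<^sub>R p + t *\<^sub>R z"
  have "psi pt \<le> ereal ((1 - t) * a + t * b)"
    unfolding pt_def using a z t0 by (intro convex_fun_le_combination[OF convex]) (auto simp: t_def)
  then have "prox_obj x pt \<le> ereal ((1 - t) * a + t * b + (norm (pt - x))\<^sup>2 / (2 * lam))"
    unfolding prox_obj_def by (metis add_right_mono plus_ereal.simps(1))
  moreover have "(norm (pt - x))\<^sup>2 = (norm (p - x))\<^sup>2 + 2 * t * ip + t\<^sup>2 * D"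
  proof -
    have "pt - x = (p - x) + t *\<^sub>R (z - p)" unfolding pt_def by (simp add: algebra_simps)
    then have "(norm (pt - x))\<^sup>2 = (norm ((p - x) + t *\<^sub>R (z - p)))\<^sup>2" by (simp only:)
    also have "\<dots> = (norm (p - x))\<^sup>2 + 2 * t * ip + t * t * D"
      unfolding ip_def D_def
      by (simp add: power2_norm_eq_inner inner_add_left inner_add_right inner_commute algebra_simps)
    finally show ?thesis by (simp add: power2_eq_square)
  qed
  ultimately have "prox_obj x p
      \<le> ereal ((1 - t) * a + t * b + ((norm (p - x))\<^sup>2 + 2 * t * ip + t\<^sup>2 * D) / (2 * lam))"
    using prox_minimizes[of x pt] unfolding p_def by simp
  then have "a + (norm (p - x))\<^sup>2 / (2 * lam)
      \<le> (1 - t) * a + t * b + ((norm (p - x))\<^sup>2 + 2 * t * ip + t\<^sup>2 * D) / (2 * lam)"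
    using a by (simp add: prox_obj_def)
  then have "(2 * lam * t) * (lam * (a - b)) \<le> (2 * lam * t) * (ip + t * D / 2)"
    using lam_pos by (simp add: field_simps power2_eq_square)
  then have "lam * (a - b) \<le> ip + t * D / 2" using lam_pos t0 by simp
  then show False using tD e by linarith
qed

lemma prox_nonexpansive: "norm (prox lam psi x - prox lam psi y) \<le> norm (x - y)"
proof -
  define p where "p = prox lam psi x"
  define q where "q = prox lam psi y"
  have "lam * (prox_val x - prox_val y) \<le> inner (p - x) (q - p)"
    unfolding p_def q_def by (rule prox_variational_ineq[OF psi_prox])
  moreover have "lam * (prox_val y - prox_val x) \<le> inner (q - y) (p - q)"
    unfolding p_def q_def by (rule prox_variational_ineq[OF psi_prox])
  moreover have "inner (p - x) (q - p) + inner (q - y) (p - q) = inner (x - y) (p - q) - (norm (p - q))\<^sup>2"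
    by (simp add: power2_norm_eq_inner inner_diff_left inner_diff_right inner_commute algebra_simps)
  ultimately have "(norm (p - q))\<^sup>2 \<le> inner (x - y) (p - q)"
    using lam_pos by (simp add: algebra_simps)
  also have "\<dots> \<le> norm (x - y) * norm (p - q)" by (rule norm_cauchy_schwarz)
  finally show ?thesis unfolding p_def q_def
    by (metis power2_eq_square mult_right_le_imp_le norm_ge_zero order.order_iff_strict zero_le_mult_iff
        mult_le_0_iff norm_not_less_zero)
qed

lemma continuous_on_prox: "continuous_on UNIV (prox lam psi)"
  by (rule lipschitz_on_continuous_on[where L=1]) (auto intro!: lipschitz_onI simp: dist_norm prox_nonexpansive)

lemma norm_prox_le: "norm (prox lam psi x) \<le> norm (prox lam psi 0) + norm x"
  using prox_nonexpansive[of x 0] norm_triangle_sub[of "prox lam psi x" "prox lam psi 0"] by simp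

lemma moreau_env_diff_le:
  "moreau_env lam psi x - moreau_env lam psi y
     \<le> norm (x - y) * (norm (prox lam psi y - x) + norm (prox lam psi y - y)) / (2 * lam)"
proof -
  let ?u = "prox lam psi y - x" and ?v = "prox lam psi y - y"
  have "moreau_env lam psi x - moreau_env lam psi y \<le> ((norm ?u)\<^sup>2 - (norm ?v)\<^sup>2) / (2 * lam)"
    using moreau_env_le[OF psi_prox[of y], of x] by (simp add: moreau_env_eq[of y] diff_divide_distrib)
  also have "(norm ?u)\<^sup>2 - (norm ?v)\<^sup>2 = (norm ?u - norm ?v) * (norm ?u + norm ?v)"
    by (simp add: power2_eq_square algebra_simps)
  also have "\<dots> \<le> norm (x - y) * (norm ?u + norm ?v)"
    using norm_triangle_ineq3[of ?u ?v] by (intro mult_right_mono) (auto simp: norm_minus_commute)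
  finally show ?thesis using lam_pos by (simp add: divide_right_mono)
qed

lemma continuous_on_moreau_env: "continuous_on UNIV (moreau_env lam psi)"
proof (intro continuous_at_imp_continuous_on ballI)
  fix x :: 'a
  let ?e = "moreau_env lam psi" and ?p = "prox lam psi"
  define G where "G y = (norm (?p y - x) + norm (?p y - y) + norm (?p x - y) + norm (?p x - x)) / (2 * lam)" for y
  have "isCont ?p y" for y using continuous_on_prox by (simp add: continuous_on_eq_continuous_at)
  then have "(G \<longlongrightarrow> G x) (at x)" unfolding G_def
    by (intro tendsto_intros isCont_tendsto_compose[where g="?p"] tendsto_ident_at) (use lam_pos in auto)
  then have lim0: "((\<lambda>y. norm (y - x) * G y) \<longlongrightarrow> 0) (at x)"
    using tendsto_mult[OF tendsto_norm[OF LIM_zero[OF tendsto_ident_at]]] by fastforce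
  have "norm (?e y - ?e x) \<le> norm (y - x) * G y" for y
  proof -
    have "norm (y - x) * (norm (?p x - y) + norm (?p x - x)) / (2 * lam) \<le> norm (y - x) * G y"
      "norm (x - y) * (norm (?p y - x) + norm (?p y - y)) / (2 * lam) \<le> norm (y - x) * G y"
      unfolding G_def times_divide_eq_right norm_minus_commute[of x y] using lam_pos
      by (intro divide_right_mono mult_left_mono; simp)+
    then show ?thesis using moreau_env_diff_le[of y x] moreau_env_diff_le[of x y] by auto
  qed
  then have "((\<lambda>y. ?e y - ?e x) \<longlongrightarrow> 0) (at x)"
    by (intro Lim_null_comparison[OF always_eventually lim0]) auto
  then show "isCont ?e x" by (simp add: isCont_def LIM_zero_iff)
qed

lemma continuous_on_moreau_env_compose [continuous_intros]:
  "continuous_on S f \<Longrightarrow> continuous_on S (\<lambda>x. moreau_env lam psi (f x))"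
  by (rule continuous_on_compose2[OF continuous_on_moreau_env]) auto

end

lemma abs_integral_le_weighted:
  fixes g f V :: "'b::euclidean_space \<Rightarrow> real"
  assumes g: "\<And>y. 0 \<le> g y" and int: "integrable N g" "integrable N (\<lambda>y. g y * V y)"
    "integrable N (\<lambda>y. g y * f y)"
    and f: "\<And>y. \<bar>f y\<bar> \<le> M * (1 + \<beta> * V y)"
  shows "\<bar>\<integral>y. g y * f y \<partial>N\<bar> \<le> M * (\<integral>y. g y \<partial>N) + M * \<beta> * (\<integral>y. g y * V y \<partial>N)"
proof -
  have "\<bar>\<integral>y. g y * f y \<partial>N\<bar> \<le> (\<integral>y. M * g y + (M * \<beta>) * (g y * V y) \<partial>N)"
  proof (rule integral_abs_bound_integral)
    fix y
    have "\<bar>g y * f y\<bar> \<le> g y * (M * (1 + \<beta> * V y))"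
      using g[of y] f[of y] by (simp add: abs_mult mult_left_mono)
    then show "\<bar>g y * f y\<bar> \<le> M * g y + (M * \<beta>) * (g y * V y)" by (simp add: algebra_simps)
  qed (use int in auto)
  also have "\<dots> = M * (\<integral>y. g y \<partial>N) + M * \<beta> * (\<integral>y. g y * V y \<partial>N)"
    using int by simp
  finally show ?thesis .
qed

lemma obtain_center_of_osc_le:
  fixes \<phi> w :: "'b \<Rightarrow> real"
  assumes bounded: "\<And>y. \<bar>\<phi> y\<bar> \<le> Bd" and w: "\<And>z. 0 \<le> w z"
    and osc: "\<And>x y. \<bar>\<phi> x - \<phi> y\<bar> \<le> w x + w y"
  obtains c where "\<And>z. \<bar>\<phi> z - c\<bar> \<le> w z"
proof
  define c where "c = (SUP z. \<phi> z - w z)"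
  have bdd: "bdd_above (range (\<lambda>z. \<phi> z - w z))"
    using bounded w by (intro bdd_aboveI2[where M=Bd]) (smt (verit) abs_ge_self)
  fix z
  have "\<phi> z - c \<le> w z"
    using cSUP_upper[OF UNIV_I bdd, of z] unfolding c_def by simp
  moreover have "c \<le> \<phi> z + w z"
    unfolding c_def using osc by (intro cSUP_least) (auto simp: abs_le_iff algebra_simps)
  ultimately show "\<bar>\<phi> z - c\<bar> \<le> w z" by simp
qed

lemma ratio_le_at_threshold:
  fixes b K g R s :: real
  assumes "R \<le> s" "0 \<le> b" "0 \<le> K" "g \<le> 1" "0 \<le> R"
  shows "2 + 2 * b * K + b * g * s \<le> ((2 + 2 * b * K + b * g * R) / (2 + b * R)) * (2 + b * s)"
proof -
  have "(2 + 2 * b * K + b * g * s) * (2 + b * R) - (2 + 2 * b * K + b * g * R) * (2 + b * s)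
      = (b * (s - R)) * (2 * g - 2 - 2 * b * K)"
    by (simp add: algebra_simps)
  also have "\<dots> \<le> 0"
  proof (rule mult_nonneg_nonpos)
    show "0 \<le> b * (s - R)" using assms by simp
    show "2 * g - 2 - 2 * b * K \<le> 0" using assms mult_nonneg_nonneg[of b K] by linarith
  qed
  finally show ?thesis
    using assms by (simp add: le_divide_eq add_pos_nonneg mult.commute mult.left_commute)
qed

locale harris_chain =
  fixes k :: "'a::euclidean_space \<Rightarrow> 'a \<Rightarrow> real" and V :: "'a \<Rightarrow> real"
    and dens :: "'a \<Rightarrow> real" and gam Kc :: real
  assumes k_nonneg: "\<And>x y. 0 \<le> k x y"
    and k_measurable: "case_prod k \<in> borel_measurable (lborel \<Otimes>\<^sub>M lborel)"
    and k_integrable: "\<And>x. integrable lborel (k x)"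
    and k_le_1: "\<And>x. (\<integral>y. k x y \<partial>lborel) \<le> 1"
    and V_ge_1: "\<And>x. 1 \<le> V x"
    and V_measurable [measurable]: "V \<in> borel_measurable borel"
    and kV_integrable: "\<And>x. integrable lborel (\<lambda>y. k x y * V y)"
    and drift: "\<And>x. (\<integral>y. k x y * V y \<partial>lborel) + (1 - (\<integral>y. k x y \<partial>lborel)) * V x \<le> gam * V x + Kc"
    and gam: "0 \<le> gam" "gam < 1"
    and Kc: "0 < Kc"
    and small_sublevel: "\<And>R. \<exists>\<delta> B. 0 < \<delta> \<and> B \<in> sets lborel \<and> 0 < measure lborel B \<and> emeasure lborel B < \<infinity>
                      \<and> (\<forall>x. V x \<le> R \<longrightarrow> (\<forall>y\<in>B. \<delta> \<le> k x y))"
    and dens_nonneg: "\<And>x. 0 \<le> dens x"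
    and dens_measurable [measurable]: "dens \<in> borel_measurable borel"
    and dens_integrable: "integrable lborel dens"
    and dens_integral: "(\<integral>x. dens x \<partial>lborel) = 1"
    and densV_integrable: "integrable lborel (\<lambda>x. dens x * V x)"
    and detailed_balance: "\<And>x y. dens x * k x y = dens y * k y x"
begin

definition hold :: "'a \<Rightarrow> real" where
  "hold x = 1 - (\<integral>y. k x y \<partial>lborel)"

definition P :: "('a \<Rightarrow> real) \<Rightarrow> 'a \<Rightarrow> real" where
  "P f x = (\<integral>y. k x y * f y \<partial>lborel) + hold x * f x"

definition contracts :: "real \<Rightarrow> real \<Rightarrow> bool" where
  "contracts a \<beta> \<longleftrightarrow> (\<forall>\<phi> Bd M. \<phi> \<in> borel_measurable borel \<longrightarrow> (\<forall>y. \<bar>\<phi> y\<bar> \<le> Bd) \<longrightarrow>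
     (\<forall>x y. \<bar>\<phi> x - \<phi> y\<bar> \<le> M * (2 + \<beta> * V x + \<beta> * V y)) \<longrightarrow>
     (\<forall>x y. \<bar>P \<phi> x - P \<phi> y\<bar> \<le> a * M * (2 + \<beta> * V x + \<beta> * V y)))"

lemma hold_nonneg: "0 \<le> hold x"
  using k_le_1[of x] by (simp add: hold_def)

lemma k_measurable_2 [measurable]: "(\<lambda>p. k (fst p) (snd p)) \<in> borel_measurable (lborel \<Otimes>\<^sub>M lborel)"
  using k_measurable by (simp add: case_prod_beta')

lemma k_measurable_1 [measurable]: "k x \<in> borel_measurable lborel"
  using k_integrable by (rule borel_measurable_integrable)

lemma integrable_k_mult_bounded:
  assumes [measurable]: "f \<in> borel_measurable borel" and "\<And>y. \<bar>f y\<bar> \<le> Bd"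
  shows "integrable lborel (\<lambda>y. k x y * f y)"
proof (rule Bochner_Integration.integrable_bound)
  show "integrable lborel (\<lambda>y. Bd * k x y)" using k_integrable by simp
  have "\<bar>k x y * f y\<bar> \<le> Bd * k x y" for y
    using assms(2)[of y] k_nonneg[of x y] by (simp add: abs_mult mult_right_mono mult.commute)
  then show "AE y in lborel. norm (k x y * f y) \<le> norm (Bd * k x y)"
    by (intro AE_I2) (auto intro: order_trans[OF _ abs_ge_self])
qed simp

lemma P_measurable:
  assumes [measurable]: "f \<in> borel_measurable borel"
  shows "P f \<in> borel_measurable borel"
proof -
  have "(\<lambda>x. \<integral>y. k x y * f y \<partial>lborel) \<in> borel_measurable lborel"
    "(\<lambda>x. \<integral>y. k x y \<partial>lborel) \<in> borel_measurable lborel"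
    by (rule lborel.borel_measurable_lebesgue_integral, measurable)+
  then have "P f \<in> borel_measurable lborel" unfolding P_def[abs_def] hold_def by measurable
  then show ?thesis by simp
qed

lemma P_diff_const:
  assumes "f \<in> borel_measurable borel" "\<And>y. \<bar>f y\<bar> \<le> Bd"
  shows "P (\<lambda>y. f y - c) x = P f x - c"
proof -
  have "(\<integral>y. k x y * (f y - c) \<partial>lborel) = (\<integral>y. k x y * f y \<partial>lborel) - (\<integral>y. k x y \<partial>lborel) * c"
    using integrable_k_mult_bounded[OF assms] k_integrable by (simp add: right_diff_distrib)
  then show ?thesis unfolding P_def hold_def by (simp add: algebra_simps)
qed

lemma P_V_le: "P V x \<le> gam * V x + Kc"
  using drift[of x] unfolding P_def hold_def .

lemma P_unit_interval:
  assumes [measurable]: "f \<in> borel_measurable borel" and f: "\<And>y. 0 \<le> f y \<and> f y \<le> 1"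
  shows "0 \<le> P f x" "P f x \<le> 1"
proof -
  have i: "integrable lborel (\<lambda>y. k x y * f y)"
    by (rule integrable_k_mult_bounded[of _ 1]) (use f in \<open>auto simp: abs_le_iff\<close>)
  have "0 \<le> (\<integral>y. k x y * f y \<partial>lborel)"
    using k_nonneg f by (intro Bochner_Integration.integral_nonneg) simp
  moreover have "(\<integral>y. k x y * f y \<partial>lborel) \<le> (\<integral>y. k x y \<partial>lborel)"
    using k_nonneg f by (intro integral_mono[OF i k_integrable]) (simp add: mult_left_le)
  moreover have "0 \<le> hold x * f x" "hold x * f x \<le> hold x"
    using hold_nonneg[of x] f[of x] by (simp_all add: mult_left_le)
  ultimately show "0 \<le> P f x" "P f x \<le> 1" unfolding P_def hold_def by linarith+
qed

lemma P_abs_le: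
  assumes [measurable]: "f \<in> borel_measurable borel" and "\<And>y. \<bar>f y\<bar> \<le> Bd"
    and f: "\<And>y. \<bar>f y\<bar> \<le> M * (1 + \<beta> * V y)"
  shows "\<bar>P f x\<bar> \<le> M + M * \<beta> * P V x"
proof -
  have "\<bar>\<integral>y. k x y * f y \<partial>lborel\<bar> \<le> M * (\<integral>y. k x y \<partial>lborel) + M * \<beta> * (\<integral>y. k x y * V y \<partial>lborel)"
    using k_nonneg k_integrable kV_integrable integrable_k_mult_bounded[OF assms(1,2)] f
    by (rule abs_integral_le_weighted)
  moreover have "\<bar>hold x * f x\<bar> \<le> hold x * (M * (1 + \<beta> * V x))"
    using hold_nonneg[of x] f[of x] by (simp add: abs_mult mult_left_mono)
  ultimately have "\<bar>P f x\<bar> \<le> M * (\<integral>y. k x y \<partial>lborel) + M * \<beta> * (\<integral>y. k x y * V y \<partial>lborel)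
      + hold x * (M * (1 + \<beta> * V x))"
    unfolding P_def by (smt (verit) abs_triangle_ineq)
  also have "\<dots> = M + M * \<beta> * P V x" unfolding P_def hold_def by (simp add: algebra_simps)
  finally show ?thesis .
qed

lemma integrable_indicator_V_small_set:
  assumes \<delta>: "0 < \<delta>" and kB: "\<And>y. y \<in> B \<Longrightarrow> \<delta> \<le> k x y" and [measurable]: "B \<in> sets borel"
  shows "integrable lborel (\<lambda>y. indicator B y * V y)"
proof (rule Bochner_Integration.integrable_bound)
  show "integrable lborel (\<lambda>y. (1 / \<delta>) * (k x y * V y))" using kV_integrable by simp
  have "indicator B y * V y \<le> (1 / \<delta>) * (k x y * V y)" for y
    using kB[of y] \<delta> V_ge_1[of y] k_nonneg[of x y]
    by (cases "y \<in> B") (auto simp: field_simps intro: mult_right_mono)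
  moreover have "norm (indicator B y * V y) = indicator B y * V y" for y
    using V_ge_1[of y] by (simp add: indicator_def)
  ultimately show "AE y in lborel. norm (indicator B y * V y) \<le> norm ((1 / \<delta>) * (k x y * V y))"
    by (intro AE_I2) (metis real_norm_def order_trans abs_ge_self)
qed simp

lemma P_small_set_le:
  assumes [measurable]: "f \<in> borel_measurable borel" and "\<And>y. \<bar>f y\<bar> \<le> Bd"
    and f: "\<And>y. \<bar>f y\<bar> \<le> M * (1 + \<beta> * V y)" and M: "0 \<le> M" and \<beta>: "0 \<le> \<beta>"
    and \<delta>: "0 < \<delta>" and B: "B \<in> sets lborel" "emeasure lborel B < \<infinity>"
    and kB: "\<And>y. y \<in> B \<Longrightarrow> \<delta> \<le> k x y"
  shows "\<bar>P f x - \<delta> * (\<integral>y. indicator B y * f y \<partial>lborel)\<bar>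
          \<le> M * (1 - \<delta> * measure lborel B) + M * \<beta> * P V x"
proof -
  have B_borel [measurable]: "B \<in> sets borel" using B by simp
  \<comment> \<open>on the small set \<open>k x - \<delta> 1\<^sub>B\<close> is still a nonnegative kernel, now of mass \<open>\<integral>k x - \<delta> |B|\<close>\<close>
  let ?g = "\<lambda>y. k x y - \<delta> * indicator B y"
  have g_nonneg: "0 \<le> ?g y" for y using kB[of y] k_nonneg[of x y] by (cases "y \<in> B") auto
  have iB: "integrable lborel (\<lambda>y. indicator B y * 1 :: real)"
    using B by (simp add: integrable_indicator_iff less_top)
  have iBV: "integrable lborel (\<lambda>y. indicator B y * V y)"
    using \<delta> kB B_borel by (rule integrable_indicator_V_small_set)
  have iBf: "integrable lborel (\<lambda>y. indicator B y * f y)"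
  proof (rule Bochner_Integration.integrable_bound)
    show "integrable lborel (\<lambda>y. Bd * (indicator B y * 1))" using iB by simp
    show "AE y in lborel. norm (indicator B y * f y) \<le> norm (Bd * (indicator B y * 1))"
      using assms(2) by (intro AE_I2) (auto simp: indicator_def intro: order_trans[OF _ abs_ge_self])
  qed simp
  have g_split: "integrable lborel (\<lambda>y. ?g y * h y)
      \<and> (\<integral>y. ?g y * h y \<partial>lborel) = (\<integral>y. k x y * h y \<partial>lborel) - \<delta> * (\<integral>y. indicator B y * h y \<partial>lborel)"
    if "integrable lborel (\<lambda>y. k x y * h y)" "integrable lborel (\<lambda>y. indicator B y * h y)" for h
  proof -
    have "(\<lambda>y. ?g y * h y) = (\<lambda>y. k x y * h y - \<delta> * (indicator B y * h y))"
      by (auto simp: algebra_simps)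
    then show ?thesis using that by simp
  qed
  note g1 = g_split[of "\<lambda>_. 1", simplified] and gV = g_split[OF kV_integrable iBV]
    and gf = g_split[OF integrable_k_mult_bounded[OF assms(1,2)] iBf]
  have "\<bar>\<integral>y. ?g y * f y \<partial>lborel\<bar> \<le> M * (\<integral>y. ?g y \<partial>lborel) + M * \<beta> * (\<integral>y. ?g y * V y \<partial>lborel)"
    using g_nonneg g1 gV gf f by (intro abs_integral_le_weighted) (use k_integrable iB in auto)
  also have "\<dots> \<le> M * ((\<integral>y. k x y \<partial>lborel) - \<delta> * measure lborel B) + M * \<beta> * (\<integral>y. k x y * V y \<partial>lborel)"
  proof -
    have "0 \<le> (\<integral>y. indicator B y * V y \<partial>lborel)"
      using V_ge_1 by (intro Bochner_Integration.integral_nonneg) (simp add: order_trans[OF zero_le_one])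
    then show ?thesis
      using g1 gV M \<beta> \<delta> k_integrable iB by (simp add: mult_left_mono mult_nonneg_nonneg)
  qed
  finally have "\<bar>\<integral>y. ?g y * f y \<partial>lborel\<bar>
      \<le> M * ((\<integral>y. k x y \<partial>lborel) - \<delta> * measure lborel B) + M * \<beta> * (\<integral>y. k x y * V y \<partial>lborel)" .
  moreover have "\<bar>hold x * f x\<bar> \<le> hold x * (M * (1 + \<beta> * V x))"
    using hold_nonneg[of x] f[of x] by (simp add: abs_mult mult_left_mono)
  moreover have "P f x - \<delta> * (\<integral>y. indicator B y * f y \<partial>lborel) = (\<integral>y. ?g y * f y \<partial>lborel) + hold x * f x"
    using gf unfolding P_def by simp
  ultimately have "\<bar>P f x - \<delta> * (\<integral>y. indicator B y * f y \<partial>lborel)\<bar>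
      \<le> M * ((\<integral>y. k x y \<partial>lborel) - \<delta> * measure lborel B) + M * \<beta> * (\<integral>y. k x y * V y \<partial>lborel)
        + hold x * (M * (1 + \<beta> * V x))"
    by (smt (verit) abs_triangle_ineq)
  also have "\<dots> = M * (1 - \<delta> * measure lborel B) + M * \<beta> * P V x"
    unfolding P_def hold_def by (simp add: algebra_simps)
  finally show ?thesis .
qed

lemma P_V_add_le: "P V x + P V y \<le> gam * (V x + V y) + 2 * Kc"
  using P_V_le[of x] P_V_le[of y] by (simp add: distrib_left)

lemma P_osc_le_drift:
  assumes "f \<in> borel_measurable borel" "\<And>y. \<bar>f y\<bar> \<le> Bd"
    and f: "\<And>y. \<bar>f y\<bar> \<le> M * (1 + \<beta> * V y)" and "0 \<le> M" "0 \<le> \<beta>"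
  shows "\<bar>P f x - P f y\<bar> \<le> M * (2 + 2 * \<beta> * Kc + \<beta> * gam * (V x + V y))"
proof -
  have "\<bar>P f x - P f y\<bar> \<le> (M + M * \<beta> * P V x) + (M + M * \<beta> * P V y)"
    using P_abs_le[OF assms(1-3), of x] P_abs_le[OF assms(1-3), of y] by linarith
  also have "\<dots> = 2 * M + (M * \<beta>) * (P V x + P V y)" by (simp add: algebra_simps)
  also have "\<dots> \<le> 2 * M + (M * \<beta>) * (gam * (V x + V y) + 2 * Kc)"
    using P_V_add_le assms(4,5) by (intro add_left_mono mult_left_mono) auto
  finally show ?thesis by (simp add: algebra_simps)
qed

lemma P_osc_le_small_set:
  assumes "f \<in> borel_measurable borel" "\<And>y. \<bar>f y\<bar> \<le> Bd"
    and "\<And>y. \<bar>f y\<bar> \<le> M * (1 + \<beta> * V y)" "0 \<le> M" "0 \<le> \<beta>"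
    and "0 < \<delta>" "B \<in> sets lborel" "emeasure lborel B < \<infinity>"
    and "\<And>z. z \<in> B \<Longrightarrow> \<delta> \<le> k x z" "\<And>z. z \<in> B \<Longrightarrow> \<delta> \<le> k y z"
  shows "\<bar>P f x - P f y\<bar> \<le> M * (2 - 2 * \<delta> * measure lborel B + 2 * \<beta> * Kc + \<beta> * gam * (V x + V y))"
proof -
  let ?J = "\<delta> * (\<integral>z. indicator B z * f z \<partial>lborel)"
  have "\<bar>P f x - P f y\<bar> \<le> \<bar>P f x - ?J\<bar> + \<bar>P f y - ?J\<bar>" by linarith
  also have "\<dots> \<le> 2 * M * (1 - \<delta> * measure lborel B) + (M * \<beta>) * (P V x + P V y)"
    using P_small_set_le[OF assms(1-8) assms(9)] P_small_set_le[OF assms(1-8) assms(10)]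
    by (simp add: algebra_simps)
  also have "\<dots> \<le> 2 * M * (1 - \<delta> * measure lborel B) + (M * \<beta>) * (gam * (V x + V y) + 2 * Kc)"
    using P_V_add_le assms(4,5) by (intro add_left_mono mult_left_mono) auto
  finally show ?thesis by (simp add: algebra_simps)
qed

lemma obtain_weighted_center:
  assumes \<beta>: "0 < \<beta>" and bounded: "\<And>y. \<bar>\<phi> y\<bar> \<le> Bd"
    and osc: "\<And>x y. \<bar>\<phi> x - \<phi> y\<bar> \<le> M * (2 + \<beta> * V x + \<beta> * V y)"
  obtains c where "0 \<le> M" "\<And>z. \<bar>\<phi> z - c\<bar> \<le> M * (1 + \<beta> * V z)"
proof -
  have "0 < 2 + \<beta> * V x + \<beta> * V x" for x using \<beta> V_ge_1[of x] by (simp add: add_pos_nonneg)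
  moreover have "0 \<le> M * (2 + \<beta> * V x + \<beta> * V x)" for x
    using osc[of x x] by simp
  ultimately have M: "0 \<le> M" by (meson zero_le_mult_iff not_le)
  have "0 \<le> M * (1 + \<beta> * V z)" for z using M \<beta> V_ge_1[of z] by simp
  moreover have "\<bar>\<phi> z - \<phi> w\<bar> \<le> M * (1 + \<beta> * V z) + M * (1 + \<beta> * V w)" for z w
    using osc[of z w] by (simp add: algebra_simps)
  ultimately show thesis
    using that[OF M] obtain_center_of_osc_le[of \<phi> Bd "\<lambda>z. M * (1 + \<beta> * V z)"] bounded by blast
qed

lemma contracts_of_small_set:
  assumes R: "0 \<le> R"
    and \<delta>: "0 < \<delta>" and B: "B \<in> sets lborel" "0 < measure lborel B" "emeasure lborel B < \<infinity>"
    and kB: "\<And>x y. V x \<le> R \<Longrightarrow> y \<in> B \<Longrightarrow> \<delta> \<le> k x y"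
  defines "\<alpha> \<equiv> \<delta> * measure lborel B"
  defines "\<beta> \<equiv> \<alpha> / (2 * Kc)"
  defines "a1 \<equiv> (2 + 2 * \<beta> * Kc + \<beta> * gam * R) / (2 + \<beta> * R)"
  defines "a \<equiv> max a1 (max (1 - \<alpha> / 2) gam)"
  shows "contracts a \<beta>"
proof (unfold contracts_def, intro allI impI)
  have \<alpha>: "0 < \<alpha>" using \<delta> B by (simp add: \<alpha>_def)
  then have \<beta>: "0 < \<beta>" "2 * \<beta> * Kc = \<alpha>" using Kc by (simp_all add: \<beta>_def)
  fix \<phi> Bd M x y
  assume \<phi> [measurable]: "\<phi> \<in> borel_measurable borel" and bounded: "\<forall>y. \<bar>\<phi> y\<bar> \<le> Bd"
    and osc: "\<forall>x y. \<bar>\<phi> x - \<phi> y\<bar> \<le> M * (2 + \<beta> * V x + \<beta> * V y)"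
  obtain c where M: "0 \<le> M" and c: "\<And>z. \<bar>\<phi> z - c\<bar> \<le> M * (1 + \<beta> * V z)"
    using obtain_weighted_center[OF \<beta>(1)] bounded osc by blast
  define f where "f z = \<phi> z - c" for z
  have f: "f \<in> borel_measurable borel" "\<And>z. \<bar>f z\<bar> \<le> Bd + \<bar>c\<bar>" "\<And>z. \<bar>f z\<bar> \<le> M * (1 + \<beta> * V z)"
    using bounded c by (auto simp: f_def[abs_def] intro: order_trans[OF abs_triangle_ineq4] add_mono)
  have "P \<phi> x - P \<phi> y = P f x - P f y"
    using P_diff_const[OF \<phi>, of Bd c] bounded by (simp add: f_def[abs_def])
  moreover have "\<bar>P f x - P f y\<bar> \<le> a * M * (2 + \<beta> * V x + \<beta> * V y)"
  proof (cases "R \<le> V x + V y")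
    case True
    have "\<bar>P f x - P f y\<bar> \<le> M * (2 + 2 * \<beta> * Kc + \<beta> * gam * (V x + V y))"
      using P_osc_le_drift[OF f M] \<beta> by simp
    also have "\<dots> \<le> M * (a1 * (2 + \<beta> * (V x + V y)))"
      unfolding a1_def using True \<beta> Kc gam R M by (intro mult_left_mono ratio_le_at_threshold) auto
    also have "\<dots> \<le> M * (a * (2 + \<beta> * (V x + V y)))"
      using M \<beta> V_ge_1[of x] V_ge_1[of y] by (intro mult_left_mono mult_right_mono) (auto simp: a_def)
    finally show ?thesis by (simp add: algebra_simps)
  next
    case False
    then have "V x \<le> R" "V y \<le> R" using V_ge_1[of x] V_ge_1[of y] by auto
    then have "\<bar>P f x - P f y\<bar> \<le> M * (2 - \<alpha> + \<beta> * gam * (V x + V y))"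
      using P_osc_le_small_set[OF f M _ \<delta> B(1,3)] kB \<beta> unfolding \<alpha>_def by fastforce
    also have "\<dots> \<le> M * (a * (2 + \<beta> * (V x + V y)))"
    proof (intro mult_left_mono M)
      have "\<beta> * gam * (V x + V y) \<le> \<beta> * a * (V x + V y)"
        using \<beta> V_ge_1[of x] V_ge_1[of y] by (intro mult_left_mono mult_right_mono) (auto simp: a_def)
      moreover have "1 - \<alpha> / 2 \<le> a" by (simp add: a_def)
      then have "2 - \<alpha> \<le> a * 2" by linarith
      ultimately show "2 - \<alpha> + \<beta> * gam * (V x + V y) \<le> a * (2 + \<beta> * (V x + V y))"
        by (simp add: algebra_simps)
    qed
    finally show ?thesis by (simp add: algebra_simps)
  qed
  ultimately show "\<bar>P \<phi> x - P \<phi> y\<bar> \<le> a * M * (2 + \<beta> * V x + \<beta> * V y)" by simp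
qed

lemma contraction: "\<exists>a \<beta>. 0 \<le> a \<and> a < 1 \<and> 0 < \<beta> \<and> contracts a \<beta>"
proof -
  define R where "R = 4 * Kc / (1 - gam) + 1"
  have "(1 - gam) * R = 4 * Kc + (1 - gam)" using gam by (simp add: R_def field_simps)
  then have R: "0 \<le> R" "2 * Kc + gam * R < R"
    using gam Kc by (auto simp: R_def left_diff_distrib)
  obtain \<delta> B where \<delta>: "0 < \<delta>" and B: "B \<in> sets lborel" "0 < measure lborel B" "emeasure lborel B < \<infinity>"
    and kB: "\<And>x y. V x \<le> R \<Longrightarrow> y \<in> B \<Longrightarrow> \<delta> \<le> k x y"
    using small_sublevel[of R] by blast
  define \<alpha> where "\<alpha> = \<delta> * measure lborel B"
  define \<beta> where "\<beta> = \<alpha> / (2 * Kc)"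
  define a1 where "a1 = (2 + 2 * \<beta> * Kc + \<beta> * gam * R) / (2 + \<beta> * R)"
  have \<alpha>: "0 < \<alpha>" using \<delta> B by (simp add: \<alpha>_def)
  then have \<beta>: "0 < \<beta>" using Kc by (simp add: \<beta>_def)
  have "\<beta> * (2 * Kc + gam * R) < \<beta> * R" using R \<beta> by simp
  then have "2 + 2 * \<beta> * Kc + \<beta> * gam * R < 2 + \<beta> * R" by (simp add: algebra_simps)
  then have "a1 < 1" unfolding a1_def using R \<beta> by (simp add: add_pos_nonneg)
  then have "0 \<le> max a1 (max (1 - \<alpha> / 2) gam)" "max a1 (max (1 - \<alpha> / 2) gam) < 1"
    using \<alpha> gam by auto
  moreover have "contracts (max a1 (max (1 - \<alpha> / 2) gam)) \<beta>"
    unfolding a1_def \<beta>_def \<alpha>_def by (rule contracts_of_small_set[OF R(1) \<delta> B kB])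
  ultimately show ?thesis using \<beta> by blast
qed

lemma integrable_dens_k_bounded:
  assumes [measurable]: "case_prod F \<in> borel_measurable (lborel \<Otimes>\<^sub>M lborel)" and F: "\<And>x y. \<bar>F x y\<bar> \<le> Bd"
  shows "integrable (lborel \<Otimes>\<^sub>M lborel) (\<lambda>(x, y). dens x * k x y * F x y)"
proof -
  have Bd: "0 \<le> Bd" using F[of undefined undefined] by linarith
  have bound: "norm (dens x * k x y * F x y) \<le> Bd * dens x * k x y" for x y
    using mult_right_mono[OF F[of x y], of "dens x * k x y"] dens_nonneg[of x] k_nonneg[of x y]
    by (simp add: abs_mult mult_ac)
  have [measurable]: "F x \<in> borel_measurable lborel" for x
    using measurable_Pair2[OF assms(1), of x] by simp
  have "integrable lborel (\<lambda>y. dens x * k x y * F x y)" for x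
  proof (rule Bochner_Integration.integrable_bound)
    show "integrable lborel (\<lambda>y. Bd * dens x * k x y)" using k_integrable by simp
    show "AE y in lborel. norm (dens x * k x y * F x y) \<le> norm (Bd * dens x * k x y)"
      using bound by (intro AE_I2) (metis real_norm_def order_trans abs_ge_self)
  qed measurable
  moreover have "integrable lborel (\<lambda>x. \<integral>y. norm (dens x * k x y * F x y) \<partial>lborel)"
  proof (rule Bochner_Integration.integrable_bound)
    show "integrable lborel (\<lambda>x. Bd * dens x)" using dens_integrable by simp
    have "(\<lambda>(x, y). norm (dens x * k x y * F x y)) \<in> borel_measurable (lborel \<Otimes>\<^sub>M lborel)"
      by measurable
    then show "(\<lambda>x. \<integral>y. norm (dens x * k x y * F x y) \<partial>lborel) \<in> borel_measurable lborel"
      by (rule lborel.borel_measurable_lebesgue_integral)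
    have le: "(\<integral>y. norm (dens x * k x y * F x y) \<partial>lborel) \<le> Bd * dens x" for x
    proof -
      have "(\<integral>y. norm (dens x * k x y * F x y) \<partial>lborel) \<le> (\<integral>y. Bd * dens x * k x y \<partial>lborel)"
        using bound k_integrable Bd dens_nonneg k_nonneg by (intro integral_mono') auto
      also have "\<dots> = Bd * dens x * (\<integral>y. k x y \<partial>lborel)" by (rule integral_mult_right_zero)
      also have "\<dots> \<le> Bd * dens x * 1"
        using k_le_1[of x] Bd dens_nonneg[of x] by (intro mult_left_mono) auto
      finally show ?thesis by simp
    qed
    have "0 \<le> (\<integral>y. norm (dens x * k x y * F x y) \<partial>lborel)" for x by simp
    then show "AE x in lborel. norm (\<integral>y. norm (dens x * k x y * F x y) \<partial>lborel) \<le> norm (Bd * dens x)"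
      using le by (intro AE_I2) (metis real_norm_def order_trans abs_ge_self abs_of_nonneg)
  qed
  ultimately show ?thesis
    by (intro lborel_pair.Fubini_integrable) (auto simp: case_prod_beta')
qed

lemma integral_dens_kernel_swap:
  assumes [measurable]: "f \<in> borel_measurable borel" and f: "\<And>y. \<bar>f y\<bar> \<le> Bd"
  shows "(\<integral>x. dens x * (\<integral>y. k x y * f y \<partial>lborel) \<partial>lborel)
       = (\<integral>x. dens x * ((\<integral>y. k x y \<partial>lborel) * f x) \<partial>lborel)"
proof -
  have "(\<integral>x. dens x * (\<integral>y. k x y * f y \<partial>lborel) \<partial>lborel) = (\<integral>x. (\<integral>y. dens x * k x y * f y \<partial>lborel) \<partial>lborel)"
    by (simp add: mult.assoc)
  also have "\<dots> = (\<integral>y. (\<integral>x. dens x * k x y * f y \<partial>lborel) \<partial>lborel)"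
    using integrable_dens_k_bounded[of "\<lambda>x y. f y" Bd] f
    by (intro lborel_pair.Fubini_integral[symmetric]) (simp add: split_beta')
  also have "\<dots> = (\<integral>y. dens y * ((\<integral>x. k y x \<partial>lborel) * f y) \<partial>lborel)"
  proof (intro Bochner_Integration.integral_cong refl)
    fix y
    have "(\<lambda>x. dens x * k x y * f y) = (\<lambda>x. (dens y * f y) * k y x)"
      using detailed_balance[of _ y] by (simp add: fun_eq_iff mult.commute mult.left_commute)
    then show "(\<integral>x. dens x * k x y * f y \<partial>lborel) = dens y * ((\<integral>x. k y x \<partial>lborel) * f y)"
      by simp
  qed
  finally show ?thesis .
qed

lemma abs_integral_k_mult_le:
  assumes "f \<in> borel_measurable borel" "\<And>y. \<bar>f y\<bar> \<le> Bd"
  shows "\<bar>\<integral>y. k x y * f y \<partial>lborel\<bar> \<le> Bd"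
proof -
  have "\<bar>\<integral>y. k x y * f y \<partial>lborel\<bar> \<le> Bd * (\<integral>y. k x y \<partial>lborel) + Bd * 0 * (\<integral>y. k x y * V y \<partial>lborel)"
    using k_nonneg k_integrable kV_integrable integrable_k_mult_bounded[OF assms]
    by (rule abs_integral_le_weighted) (use assms(2) in simp)
  also have "\<dots> \<le> Bd"
    using k_le_1[of x] assms(2)[of x] by (simp add: mult_left_le)
  finally show ?thesis .
qed

lemma integral_dens_P:
  assumes [measurable]: "f \<in> borel_measurable borel" and f: "\<And>y. \<bar>f y\<bar> \<le> Bd"
  shows "(\<integral>x. dens x * P f x \<partial>lborel) = (\<integral>x. dens x * f x \<partial>lborel)"
proof -
  have integrable_dens_bounded: "integrable lborel (\<lambda>x. dens x * g x)"
    if [measurable]: "g \<in> borel_measurable lborel" and g: "\<And>x. \<bar>g x\<bar> \<le> Bd" for g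
  proof (rule Bochner_Integration.integrable_bound)
    show "integrable lborel (\<lambda>x. Bd * dens x)" using dens_integrable by simp
    have "norm (dens x * g x) \<le> Bd * dens x" for x
      using mult_left_mono[OF g[of x] dens_nonneg[of x]] dens_nonneg[of x] by (simp add: abs_mult mult.commute)
    then show "AE x in lborel. norm (dens x * g x) \<le> norm (Bd * dens x)"
      by (intro AE_I2) (metis real_norm_def order_trans abs_ge_self)
  qed simp
  have [measurable]: "(\<lambda>x. \<integral>y. k x y * f y \<partial>lborel) \<in> borel_measurable lborel"
    "(\<lambda>x. \<integral>y. k x y \<partial>lborel) \<in> borel_measurable lborel"
    by (rule lborel.borel_measurable_lebesgue_integral, measurable)+
  have "\<bar>(\<integral>y. k x y \<partial>lborel) * f x\<bar> \<le> Bd" for x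
    using abs_integral_k_mult_le[of "\<lambda>_. f x" "\<bar>f x\<bar>" x] f[of x] by (simp add: abs_mult)
  then have "integrable lborel (\<lambda>x. dens x * (\<integral>y. k x y * f y \<partial>lborel))"
    "integrable lborel (\<lambda>x. dens x * f x)"
    "integrable lborel (\<lambda>x. dens x * ((\<integral>y. k x y \<partial>lborel) * f x))"
    using abs_integral_k_mult_le[OF assms(1) f] f by (auto intro!: integrable_dens_bounded)
  moreover have "dens x * P f x
      = dens x * (\<integral>y. k x y * f y \<partial>lborel) + dens x * f x - dens x * ((\<integral>y. k x y \<partial>lborel) * f x)" for x
    unfolding P_def hold_def by (simp add: algebra_simps)
  ultimately show ?thesis
    using integral_dens_kernel_swap[OF assms] by simp
qed

lemma iterate_P_unit_interval:
  assumes "f \<in> borel_measurable borel" "\<And>y. 0 \<le> f y \<and> f y \<le> 1"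
  shows "(P ^^ n) f \<in> borel_measurable borel" "0 \<le> (P ^^ n) f y" "(P ^^ n) f y \<le> 1"
proof -
  have "(P ^^ n) f \<in> borel_measurable borel \<and> (\<forall>y. 0 \<le> (P ^^ n) f y \<and> (P ^^ n) f y \<le> 1)"
    using assms by (induction n) (simp_all add: P_measurable P_unit_interval)
  then show "(P ^^ n) f \<in> borel_measurable borel" "0 \<le> (P ^^ n) f y" "(P ^^ n) f y \<le> 1" by auto
qed

lemma integral_dens_iterate_P:
  assumes "f \<in> borel_measurable borel" "\<And>y. 0 \<le> f y \<and> f y \<le> 1"
  shows "(\<integral>x. dens x * (P ^^ n) f x \<partial>lborel) = (\<integral>x. dens x * f x \<partial>lborel)"
proof (induction n)
  case (Suc n)
  have "\<bar>(P ^^ n) f y\<bar> \<le> 1" for y using iterate_P_unit_interval(2,3)[OF assms, of n y] by simp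
  then have "(\<integral>x. dens x * P ((P ^^ n) f) x \<partial>lborel) = (\<integral>x. dens x * (P ^^ n) f x \<partial>lborel)"
    by (rule integral_dens_P[OF iterate_P_unit_interval(1)[OF assms], where Bd=1])
  then show ?case using Suc by simp
qed simp

lemma iterate_P_osc_le:
  assumes "contracts a \<beta>" "0 < \<beta>" "f \<in> borel_measurable borel" "\<And>y. 0 \<le> f y \<and> f y \<le> 1"
  shows "\<bar>(P ^^ n) f x - (P ^^ n) f y\<bar> \<le> a ^ n / 2 * (2 + \<beta> * V x + \<beta> * V y)"
proof (induction n arbitrary: x y)
  case 0
  have "\<bar>f x - f y\<bar> \<le> 1" using assms(4)[of x] assms(4)[of y] by linarith
  also have "1 \<le> 1 / 2 * (2 + \<beta> * V x + \<beta> * V y)"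
    using assms(2) V_ge_1[of x] V_ge_1[of y] by simp
  finally show ?case by simp
next
  case (Suc n)
  have "\<forall>y. \<bar>(P ^^ n) f y\<bar> \<le> 1" using iterate_P_unit_interval(2,3)[OF assms(3,4), of n] by simp
  then have "\<bar>P ((P ^^ n) f) x - P ((P ^^ n) f) y\<bar> \<le> a * (a ^ n / 2) * (2 + \<beta> * V x + \<beta> * V y)"
    using assms(1) iterate_P_unit_interval(1)[OF assms(3,4)] Suc unfolding contracts_def by blast
  then show ?case by (simp add: mult.assoc)
qed

lemma abs_sub_integral_dens_le:
  assumes [measurable]: "u \<in> borel_measurable borel" and "\<And>y. \<bar>u y\<bar> \<le> 1"
    and osc: "\<And>y. \<bar>u x - u y\<bar> \<le> c * (2 + \<beta> * V x + \<beta> * V y)"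
  shows "\<bar>u x - (\<integral>y. dens y * u y \<partial>lborel)\<bar> \<le> c * (2 + \<beta> * V x) + c * \<beta> * (\<integral>y. dens y * V y \<partial>lborel)"
proof -
  have iu: "integrable lborel (\<lambda>y. dens y * u y)"
  proof (rule Bochner_Integration.integrable_bound[OF dens_integrable])
    show "AE y in lborel. norm (dens y * u y) \<le> norm (dens y)"
      using assms(2) dens_nonneg by (intro AE_I2) (simp add: abs_mult mult_left_le)
  qed simp
  have "u x - (\<integral>y. dens y * u y \<partial>lborel) = (\<integral>y. dens y * (u x - u y) \<partial>lborel)"
    using iu dens_integrable dens_integral by (simp add: right_diff_distrib)
  also have "\<bar>\<dots>\<bar> \<le> (\<integral>y. c * (2 + \<beta> * V x) * dens y + c * \<beta> * (dens y * V y) \<partial>lborel)"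
  proof (rule integral_abs_bound_integral)
    show "integrable lborel (\<lambda>y. dens y * (u x - u y))"
      using iu dens_integrable by (simp add: right_diff_distrib)
    show "integrable lborel (\<lambda>y. c * (2 + \<beta> * V x) * dens y + c * \<beta> * (dens y * V y))"
      using dens_integrable densV_integrable by simp
    fix y
    have "\<bar>dens y * (u x - u y)\<bar> \<le> dens y * (c * (2 + \<beta> * V x + \<beta> * V y))"
      using osc[of y] dens_nonneg[of y] by (simp add: abs_mult mult_left_mono)
    then show "\<bar>dens y * (u x - u y)\<bar> \<le> c * (2 + \<beta> * V x) * dens y + c * \<beta> * (dens y * V y)"
      by (simp add: algebra_simps)
  qed
  also have "\<dots> = c * (2 + \<beta> * V x) + c * \<beta> * (\<integral>y. dens y * V y \<partial>lborel)"
    using dens_integrable densV_integrable dens_integral by simp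
  finally show ?thesis .
qed

theorem geometrically_ergodic_P:
  "geometrically_ergodic (\<lambda>n x A. (P ^^ n) (indicator A) x) (density lborel dens)"
proof -
  obtain a \<beta> where a: "0 \<le> a" "a < 1" and \<beta>: "0 < \<beta>" and contracts: "contracts a \<beta>"
    using contraction by blast
  define C where "C x = (2 + \<beta> * V x + \<beta> * (\<integral>y. dens y * V y \<partial>lborel)) / 2" for x
  have "\<bar>(P ^^ n) (indicator A) x - measure (density lborel dens) A\<bar> \<le> C x * a ^ n"
    if "A \<in> sets (density lborel dens)" for A n x
  proof -
    have "A \<in> sets borel" using that by simp
    then have ind: "(indicator A :: 'a \<Rightarrow> real) \<in> borel_measurable borel"
      "\<And>y. 0 \<le> (indicator A y :: real) \<and> (indicator A y :: real) \<le> 1"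
      by (simp_all split: split_indicator)
    have "measure (density lborel dens) A = (\<integral>y. indicator A y \<partial>density lborel dens)"
      using that by simp
    also have "\<dots> = (\<integral>y. dens y * indicator A y \<partial>lborel)"
      using dens_nonneg ind(1) by (subst integral_density) auto
    also have "\<dots> = (\<integral>y. dens y * (P ^^ n) (indicator A) y \<partial>lborel)"
      by (rule integral_dens_iterate_P[OF ind, symmetric])
    finally have measure_A: "measure (density lborel dens) A = \<dots>" .
    have "\<bar>(P ^^ n) (indicator A) y\<bar> \<le> 1" for y
      using iterate_P_unit_interval(2,3)[OF ind, of n y] by simp
    from abs_sub_integral_dens_le[OF iterate_P_unit_interval(1)[OF ind] this
        iterate_P_osc_le[OF contracts \<beta> ind]]
    show ?thesis unfolding measure_A by (simp add: C_def field_simps)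
  qed
  then show ?thesis
    unfolding geometrically_ergodic_def tv_dist_def using a
    by (intro exI[of _ a] exI[of _ C] conjI AE_I2 allI cSUP_least) auto
qed

end

locale mala_setting = moreau_setting psi lam m for psi :: "'a::euclidean_space \<Rightarrow> ereal" and lam m +
  fixes h :: real
  assumes h_pos: "0 < h" and h_le: "h \<le> 2 * lam"
begin

definition center :: "'a \<Rightarrow> 'a" where
  "center x = x - (h / 2) *\<^sub>R grad_env lam psi x"

abbreviation q :: "'a \<Rightarrow> 'a \<Rightarrow> real" where
  "q \<equiv> mala_q lam psi h"

lemma q_eq_gauss_dens: "q x y = gauss_dens h (y - center x)"
  unfolding mala_q_def gauss_dens_def center_def by simp

lemma q_pos: "0 < q x y"
  using gauss_dens_pos[OF h_pos] by (simp add: q_eq_gauss_dens)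

lemma center_eq: "center x = (1 - h / (2 * lam)) *\<^sub>R x + (h / (2 * lam)) *\<^sub>R prox lam psi x"
  unfolding center_def grad_env_def using lam_pos by (simp add: algebra_simps)

lemma norm_center_le: "norm (center x) \<le> (1 - h / (2 * lam)) * norm x + (h / (2 * lam)) * norm (prox lam psi x)"
proof -
  have "0 \<le> 1 - h / (2 * lam)" "0 \<le> h / (2 * lam)" using h_le h_pos lam_pos by auto
  have "norm (center x) \<le> norm ((1 - h / (2 * lam)) *\<^sub>R x) + norm ((h / (2 * lam)) *\<^sub>R prox lam psi x)"
    unfolding center_eq by (rule norm_triangle_ineq)
  also have "\<dots> = (1 - h / (2 * lam)) * norm x + (h / (2 * lam)) * norm (prox lam psi x)"
    using \<open>0 \<le> 1 - h / (2 * lam)\<close> \<open>0 \<le> h / (2 * lam)\<close> by (simp only: norm_scaleR abs_of_nonneg)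
  finally show ?thesis .
qed

lemma norm_center_le_norm_prox_0: "norm (center x) \<le> norm x + norm (prox lam psi 0)"
proof -
  have "0 \<le> h / (2 * lam)" "h / (2 * lam) \<le> 1" using h_le h_pos lam_pos by auto
  then have "(h / (2 * lam)) * norm (prox lam psi x) \<le> (h / (2 * lam)) * (norm (prox lam psi 0) + norm x)"
    using norm_prox_le[of x] by (intro mult_left_mono) auto
  also have "\<dots> = (h / (2 * lam)) * norm (prox lam psi 0) + (h / (2 * lam)) * norm x"
    by (rule distrib_left)
  also have "\<dots> \<le> norm (prox lam psi 0) + (h / (2 * lam)) * norm x"
    using \<open>h / (2 * lam) \<le> 1\<close> \<open>0 \<le> h / (2 * lam)\<close>
    by (intro add_right_mono mult_left_le_one_le) auto
  finally show ?thesis using norm_center_le[of x] by (simp add: algebra_simps)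
qed

lemma continuous_on_center [continuous_intros]:
  "continuous_on S f \<Longrightarrow> continuous_on S (\<lambda>x. center (f x))"
  unfolding center_eq by (intro continuous_intros continuous_on_compose2[OF continuous_on_prox]) auto

lemma q_measurable [measurable]: "q x \<in> borel_measurable borel"
  unfolding q_eq_gauss_dens[abs_def] by measurable

lemma integral_q_translate:
  assumes [measurable]: "g \<in> borel_measurable borel"
  shows "integrable lborel (\<lambda>y. q x y * g y) \<longleftrightarrow> integrable lborel (\<lambda>z. gauss_dens h z * g (center x + z))"
    and "(\<integral>y. q x y * g y \<partial>lborel) = (\<integral>z. gauss_dens h z * g (center x + z) \<partial>lborel)"
  using lborel_integral_translate[of "\<lambda>y. q x y * g y" "center x"] by (simp_all add: q_eq_gauss_dens)

lemma integrable_q: "integrable lborel (q x)" and integral_q: "(\<integral>y. q x y \<partial>lborel) = 1"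
  using integral_q_translate[of "\<lambda>_. 1" x] has_bochner_integral_gauss_dens[OF h_pos, where 'a='a]
  by (simp_all add: has_bochner_integral_iff)

lemma integrable_q_second_moment: "integrable lborel (\<lambda>y. q x y * (norm (y - center x))\<^sup>2)"
  and integral_q_second_moment: "(\<integral>y. q x y * (norm (y - center x))\<^sup>2 \<partial>lborel) = real DIM('a) * h"
  using integral_q_translate[of "\<lambda>y. (norm (y - center x))\<^sup>2" x]
    has_bochner_integral_gauss_dens_norm_sq[OF h_pos, where 'a='a]
  by (simp_all add: has_bochner_integral_iff)

lemma integrable_q_norm: "integrable lborel (\<lambda>y. q x y * (1 + norm y))"
  and integral_q_norm_le: "(\<integral>y. q x y * (1 + norm y) \<partial>lborel) \<le> 2 + norm (center x) + real DIM('a) * h"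
proof -
  have bound_int: "integrable lborel (\<lambda>y. (2 + norm (center x)) * q x y + q x y * (norm (y - center x))\<^sup>2)"
    using integrable_q integrable_q_second_moment by simp
  have bound: "q x y * (1 + norm y) \<le> (2 + norm (center x)) * q x y + q x y * (norm (y - center x))\<^sup>2" for y
  proof -
    have "0 \<le> (norm (y - center x) - 1/2)\<^sup>2" by simp
    then have "norm (y - center x) \<le> 1 + (norm (y - center x))\<^sup>2"
      by (simp add: power2_eq_square algebra_simps)
    then have "1 + norm y \<le> 2 + norm (center x) + (norm (y - center x))\<^sup>2"
      using norm_triangle_sub[of y "center x"] by (simp add: add.commute)
    then have "q x y * (1 + norm y) \<le> q x y * (2 + norm (center x) + (norm (y - center x))\<^sup>2)"
      using q_pos[of x y] by (intro mult_left_mono) auto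
    then show ?thesis by (simp add: algebra_simps)
  qed
  have "norm (q x y * (1 + norm y)) \<le> norm ((2 + norm (center x)) * q x y + q x y * (norm (y - center x))\<^sup>2)" for y
    using bound[of y] q_pos[of x y] by (simp add: order_trans[OF _ abs_ge_self])
  then show integrable: "integrable lborel (\<lambda>y. q x y * (1 + norm y))"
    by (intro Bochner_Integration.integrable_bound[OF bound_int] AE_I2) auto
  have "(\<integral>y. q x y * (1 + norm y) \<partial>lborel)
      \<le> (\<integral>y. (2 + norm (center x)) * q x y + q x y * (norm (y - center x))\<^sup>2 \<partial>lborel)"
    by (rule integral_mono[OF integrable bound_int bound])
  also have "\<dots> = 2 + norm (center x) + real DIM('a) * h"
    using integrable_q integrable_q_second_moment integral_q integral_q_second_moment by simp
  finally show "(\<integral>y. q x y * (1 + norm y) \<partial>lborel) \<le> 2 + norm (center x) + real DIM('a) * h" .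
qed

end

locale mala = mala_setting psi lam m h for psi :: "'a::euclidean_space \<Rightarrow> ereal" and lam m h +
  fixes Rg lg :: real
  assumes lg: "0 \<le> lg" "lg < 1" and Rg: "0 \<le> Rg"
    and prox_growth: "\<And>x. Rg \<le> norm x \<Longrightarrow> norm (prox lam psi x) \<le> lg * norm x"
    and inwards: "((\<lambda>x. \<integral> y. indicator
            (sym_diff {y. target_dens lam psi y * mala_q lam psi h y x
                          \<ge> target_dens lam psi x * mala_q lam psi h x y}
                      {y. norm y \<le> norm x}) y
            * mala_q lam psi h x y \<partial>lborel) \<longlongrightarrow> 0) at_infinity"
begin

definition tail_var :: real where
  "tail_var = lam / (1 - lg)\<^sup>2"

lemma tail_var_pos: "0 < tail_var"
  unfolding tail_var_def using lam_pos lg by simp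

lemma moreau_env_ge_quadratic: "m - Rg\<^sup>2 / (2 * tail_var) + (norm x)\<^sup>2 / (2 * tail_var) \<le> moreau_env lam psi x"
proof (cases "Rg \<le> norm x")
  case True
  have "(1 - lg) * norm x \<le> norm (prox lam psi x - x)"
    using prox_growth[OF True] norm_triangle_ineq3[of x "prox lam psi x"]
    by (simp add: norm_minus_commute algebra_simps)
  then have "((1 - lg) * norm x)\<^sup>2 / (2 * lam) \<le> (norm (prox lam psi x - x))\<^sup>2 / (2 * lam)"
    using lg lam_pos by (intro divide_right_mono power_mono) auto
  moreover have "((1 - lg) * norm x)\<^sup>2 / (2 * lam) = (norm x)\<^sup>2 / (2 * tail_var)"
    unfolding tail_var_def power_mult_distrib using lam_pos lg by (simp add: field_simps)
  moreover have "0 \<le> Rg\<^sup>2 / (2 * tail_var)" using tail_var_pos by simp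
  ultimately show ?thesis using prox_val_ge[of x] moreau_env_eq[of x] by linarith
next
  case False
  then have "(norm x)\<^sup>2 \<le> Rg\<^sup>2" by (intro power_mono) auto
  then have "(norm x)\<^sup>2 / (2 * tail_var) \<le> Rg\<^sup>2 / (2 * tail_var)"
    using tail_var_pos by (intro divide_right_mono) auto
  then show ?thesis using moreau_env_ge[of x] by linarith
qed

lemma obtain_gauss_dominant:
  obtains C where "0 < C" "\<And>x. exp (- moreau_env lam psi x) \<le> C * gauss_dens tail_var x"
proof
  let ?c = "(2 * pi * tail_var) powr (- real DIM('a) / 2)"
  show "0 < exp (Rg\<^sup>2 / (2 * tail_var) - m) / ?c" using tail_var_pos by simp
  fix x
  have "exp (- moreau_env lam psi x) \<le> exp (Rg\<^sup>2 / (2 * tail_var) - m + - (norm x)\<^sup>2 / (2 * tail_var))"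
    using moreau_env_ge_quadratic[of x] by simp
  also have "\<dots> = exp (Rg\<^sup>2 / (2 * tail_var) - m) * exp (- (norm x)\<^sup>2 / (2 * tail_var))"
    by (rule exp_add)
  also have "\<dots> = exp (Rg\<^sup>2 / (2 * tail_var) - m) / ?c * gauss_dens tail_var x"
    using tail_var_pos by (simp add: gauss_dens_def)
  finally show "exp (- moreau_env lam psi x) \<le> exp (Rg\<^sup>2 / (2 * tail_var) - m) / ?c * gauss_dens tail_var x" .
qed

lemma borel_measurable_exp_neg_moreau_env [measurable]:
  "(\<lambda>x. exp (- moreau_env lam psi x)) \<in> borel_measurable borel"
  by (intro borel_measurable_continuous_onI continuous_intros continuous_on_id)

lemma integrable_exp_neg_moreau_env_norm: "integrable lborel (\<lambda>x. exp (- moreau_env lam psi x) * (1 + norm x))"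
proof -
  obtain C where C: "0 < C" "\<And>x. exp (- moreau_env lam psi x) \<le> C * gauss_dens tail_var x"
    using obtain_gauss_dominant by blast
  have g: "integrable lborel (gauss_dens tail_var :: 'a \<Rightarrow> real)"
    "integrable lborel (\<lambda>x::'a. gauss_dens tail_var x * (norm x)\<^sup>2)"
    using has_bochner_integral_gauss_dens[OF tail_var_pos] has_bochner_integral_gauss_dens_norm_sq[OF tail_var_pos]
    by (auto intro: integrable.intros)
  show ?thesis
  proof (rule Bochner_Integration.integrable_bound)
    show "integrable lborel (\<lambda>x::'a. (2 * C) * gauss_dens tail_var x + C * (gauss_dens tail_var x * (norm x)\<^sup>2))"
      using g by simp
    have "norm (exp (- moreau_env lam psi x) * (1 + norm x))
        \<le> (2 * C) * gauss_dens tail_var x + C * (gauss_dens tail_var x * (norm x)\<^sup>2)" for x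
    proof -
      have "0 \<le> (norm x - 1/2)\<^sup>2" by simp
      then have "1 + norm x \<le> 2 + (norm x)\<^sup>2" by (simp add: power2_eq_square algebra_simps)
      then have "exp (- moreau_env lam psi x) * (1 + norm x) \<le> (C * gauss_dens tail_var x) * (2 + (norm x)\<^sup>2)"
        using C gauss_dens_pos[OF tail_var_pos, of x] by (intro mult_mono) (auto intro: less_imp_le)
      then show ?thesis by (simp add: algebra_simps)
    qed
    then show "AE x in lborel. norm (exp (- moreau_env lam psi x) * (1 + norm x))
        \<le> norm ((2 * C) * gauss_dens tail_var x + C * (gauss_dens tail_var x * (norm x)\<^sup>2))"
      by (intro AE_I2) (metis real_norm_def order_trans abs_ge_self)
  qed simp
qed

lemma integrable_exp_neg_moreau_env: "integrable lborel (\<lambda>x. exp (- moreau_env lam psi x))"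
  by (rule Bochner_Integration.integrable_bound[OF integrable_exp_neg_moreau_env_norm]) (auto intro!: AE_I2)

definition Z :: real where
  "Z = (\<integral>x. exp (- moreau_env lam psi x) \<partial>lborel)"

lemma Z_pos: "0 < Z"
proof -
  have "AE x in lborel. exp (- moreau_env lam psi x) = 0" if "Z = 0"
    using that integral_nonneg_eq_0_iff_AE[OF integrable_exp_neg_moreau_env] by (simp add: Z_def)
  then have "Z \<noteq> 0" using ae_filter_eq_bot_iff[of "lborel :: 'a measure"] by (auto simp: eventually_False)
  moreover have "0 \<le> Z" unfolding Z_def by (rule Bochner_Integration.integral_nonneg) simp
  ultimately show ?thesis by simp
qed

abbreviation dens :: "'a \<Rightarrow> real" where
  "dens \<equiv> target_dens lam psi"

lemma dens_eq: "dens x = exp (- moreau_env lam psi x) / Z"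
  unfolding target_dens_def Z_def ..

lemma dens_pos: "0 < dens x"
  using Z_pos by (simp add: dens_eq)

lemma continuous_on_dens [continuous_intros]: "continuous_on S f \<Longrightarrow> continuous_on S (\<lambda>x. dens (f x))"
  unfolding dens_eq by (intro continuous_intros) (use Z_pos in auto)

lemma dens_measurable [measurable]: "dens \<in> borel_measurable borel"
  by (intro borel_measurable_continuous_onI continuous_intros continuous_on_id)

lemma integrable_dens: "integrable lborel dens"
  unfolding dens_eq[abs_def] using integrable_exp_neg_moreau_env by simp

lemma integral_dens: "(\<integral>x. dens x \<partial>lborel) = 1"
  unfolding dens_eq[abs_def] using Z_pos by (simp add: Z_def[symmetric])

lemma integrable_dens_norm: "integrable lborel (\<lambda>x. dens x * (1 + norm x))"
proof -
  have "integrable lborel (\<lambda>x. exp (- moreau_env lam psi x) * (1 + norm x) / Z)"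
    using integrable_exp_neg_moreau_env_norm by simp
  then show ?thesis by (simp add: dens_eq)
qed

abbreviation acc :: "'a \<Rightarrow> 'a \<Rightarrow> real" where
  "acc \<equiv> mala_acc lam psi h"

abbreviation k :: "'a \<Rightarrow> 'a \<Rightarrow> real" where
  "k x y \<equiv> q x y * acc x y"

lemma dens_q_pos: "0 < dens x * q x y"
  using dens_pos q_pos by simp

lemma acc_nonneg: "0 \<le> acc x y"
  unfolding mala_acc_def using dens_q_pos[of x y] dens_q_pos[of y x] by simp

lemma acc_le_1: "acc x y \<le> 1"
  unfolding mala_acc_def by simp

lemma acc_eq_1: "dens x * q x y \<le> dens y * q y x \<Longrightarrow> acc x y = 1"
  unfolding mala_acc_def using dens_q_pos[of x y] by simp

lemma detailed_balance: "dens x * k x y = dens y * k y x"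
proof -
  have min_eq: "a * min 1 (b / a) = min a b" if "0 < a" for a b :: real
    using that by (cases "1 \<le> b / a") (auto simp: min_def field_simps)
  have "dens x * k x y = min (dens x * q x y) (dens y * q y x)"
    using min_eq[OF dens_q_pos[of x y]] by (simp add: mala_acc_def mult_ac)
  also have "\<dots> = dens y * k y x"
    using min_eq[OF dens_q_pos[of y x]] by (simp add: mala_acc_def mult_ac min.commute)
  finally show ?thesis .
qed

lemma k_nonneg: "0 \<le> k x y"
  using q_pos[of x y] acc_nonneg[of x y] by simp

lemma k_le_q: "k x y \<le> q x y"
  using q_pos[of x y] acc_le_1[of x y] by (simp add: mult_left_le)

lemma continuous_on_k: "continuous_on UNIV (\<lambda>p. k (fst p) (snd p))"
  unfolding mala_acc_def q_eq_gauss_dens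
  using dens_pos[THEN less_imp_neq, THEN not_sym] gauss_dens_pos[OF h_pos, THEN less_imp_neq, THEN not_sym]
  by (intro continuous_intros h_pos) auto

lemma k_measurable: "case_prod k \<in> borel_measurable (lborel \<Otimes>\<^sub>M lborel)"
proof -
  have "sets (lborel \<Otimes>\<^sub>M lborel) = sets (borel \<Otimes>\<^sub>M (borel :: 'a measure))"
    by (intro sets_pair_measure_cong) auto
  also have "\<dots> = sets (borel :: ('a \<times> 'a) measure)" by (simp only: borel_prod)
  finally have sets_eq: "sets (lborel \<Otimes>\<^sub>M lborel) = sets (borel :: ('a \<times> 'a) measure)" .
  have "(\<lambda>p. k (fst p) (snd p)) \<in> borel_measurable (borel :: ('a \<times> 'a) measure)"
    by (rule borel_measurable_continuous_onI[OF continuous_on_k])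
  then show ?thesis
    using measurable_cong_sets[OF sets_eq refl, where N="borel :: real measure"]
    by (simp add: case_prod_beta')
qed

lemma q_measurable_1 [measurable]: "(\<lambda>y. q y x) \<in> borel_measurable borel"
  unfolding q_eq_gauss_dens using h_pos
  by (intro borel_measurable_continuous_onI continuous_intros continuous_on_id) auto

lemma k_measurable_1 [measurable]: "k x \<in> borel_measurable borel"
proof -
  have "continuous_on UNIV (\<lambda>y. k x y)"
    using continuous_on_compose2[OF continuous_on_k continuous_on_Pair[OF continuous_on_const continuous_on_id]]
    by simp
  then show ?thesis by (rule borel_measurable_continuous_onI)
qed

lemma integrable_k: "integrable lborel (k x)"
  using k_le_q k_nonneg q_pos
  by (intro Bochner_Integration.integrable_bound[OF integrable_q[of x]] AE_I2) (auto simp: abs_of_pos)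

lemma integral_k_le_1: "(\<integral>y. k x y \<partial>lborel) \<le> 1"
  using integral_mono[OF integrable_k integrable_q k_le_q] integral_q by simp

lemma k_norm_le_q_norm: "k x y * (1 + norm y) \<le> q x y * (1 + norm y)"
  using k_le_q by (intro mult_right_mono) auto

lemma integrable_k_norm: "integrable lborel (\<lambda>y. k x y * (1 + norm y))"
proof (rule Bochner_Integration.integrable_bound[OF integrable_q_norm[of x]])
  have "0 \<le> k x y * (1 + norm y)" for y using k_nonneg[of x y] by simp
  then show "AE y in lborel. norm (k x y * (1 + norm y)) \<le> norm (q x y * (1 + norm y))"
    using k_norm_le_q_norm by (intro AE_I2) (metis real_norm_def abs_of_nonneg abs_ge_self order_trans)
qed simp

lemma integral_k_norm_le: "(\<integral>y. k x y * (1 + norm y) \<partial>lborel) \<le> 2 + norm (center x) + real DIM('a) * h"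
  using integral_mono[OF integrable_k_norm integrable_q_norm k_norm_le_q_norm, of x] integral_q_norm_le[of x]
  by linarith

lemma integrable_indicator_q:
  assumes "S \<in> sets borel"
  shows "integrable lborel (\<lambda>y. indicator S y * q x y)"
proof (rule Bochner_Integration.integrable_bound[OF integrable_q[of x]])
  show "AE y in lborel. norm (indicator S y * q x y) \<le> norm (q x y)"
    using q_pos[of x] by (intro AE_I2) (simp add: indicator_def)
qed (use assms in simp)

lemma rejection_le:
  "1 - (\<integral>y. k x y \<partial>lborel)
     \<le> (\<integral>y. indicator (sym_diff {y. dens y * q y x \<ge> dens x * q x y} {y. norm y \<le> norm x}) y * q x y \<partial>lborel)
       + (\<integral>y. indicator {y. norm x < norm y} y * q x y \<partial>lborel)"
  (is "_ \<le> (\<integral>y. indicator ?D y * q x y \<partial>lborel) + (\<integral>y. indicator ?O y * q x y \<partial>lborel)")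
proof -
  have "?D \<in> sets borel" "?O \<in> sets borel" by measurable
  then have int: "integrable lborel (\<lambda>y. indicator ?D y * q x y)" "integrable lborel (\<lambda>y. indicator ?O y * q x y)"
    by (simp_all add: integrable_indicator_q)
  have "1 - (\<integral>y. k x y \<partial>lborel) = (\<integral>y. q x y - k x y \<partial>lborel)"
    using integrable_q integrable_k integral_q by simp
  also have "\<dots> \<le> (\<integral>y. indicator ?D y * q x y + indicator ?O y * q x y \<partial>lborel)"
  proof (rule integral_mono)
    fix y
    have "acc x y = 1" if "y \<notin> ?D" "y \<notin> ?O"
      using that by (intro acc_eq_1) auto
    then show "q x y - k x y \<le> indicator ?D y * q x y + indicator ?O y * q x y"
      using k_nonneg[of x y] q_pos[of x y] by (auto simp: indicator_def)
  qed (use int integrable_q integrable_k in auto)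
  also have "\<dots> = (\<integral>y. indicator ?D y * q x y \<partial>lborel) + (\<integral>y. indicator ?O y * q x y \<partial>lborel)"
    using int by simp
  finally show ?thesis .
qed

lemma integral_q_outside_le:
  assumes "norm (center x) < norm x"
  shows "(\<integral>y. indicator {y. norm x < norm y} y * q x y \<partial>lborel) \<le> real DIM('a) * h / (norm x - norm (center x))\<^sup>2"
proof -
  let ?D = "norm x - norm (center x)"
  have "(\<integral>y. indicator {y. norm x < norm y} y * q x y \<partial>lborel) \<le> (\<integral>y. q x y * (norm (y - center x))\<^sup>2 / ?D\<^sup>2 \<partial>lborel)"
  proof (rule integral_mono)
    fix y
    show "indicator {y. norm x < norm y} y * q x y \<le> q x y * (norm (y - center x))\<^sup>2 / ?D\<^sup>2"
    proof (cases "norm x < norm y")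
      case True
      then have "?D \<le> norm (y - center x)" using norm_triangle_ineq2[of y "center x"] by linarith
      then have "?D\<^sup>2 \<le> (norm (y - center x))\<^sup>2" using assms by (intro power_mono) auto
      then have "1 \<le> (norm (y - center x))\<^sup>2 / ?D\<^sup>2" using assms by simp
      then have "q x y * 1 \<le> q x y * ((norm (y - center x))\<^sup>2 / ?D\<^sup>2)"
        using q_pos[of x y] by (intro mult_left_mono) auto
      then show ?thesis using True by simp
    qed (use q_pos[of x y] in simp)
  qed (use integrable_indicator_q integrable_q_second_moment in simp_all)
  also have "\<dots> = real DIM('a) * h / ?D\<^sup>2"
    using integrable_q_second_moment integral_q_second_moment by simp
  finally show ?thesis .
qed

definition kappa :: real where
  "kappa = 1 - h / (2 * lam) * (1 - lg)"

lemma kappa_nonneg: "0 \<le> kappa"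
proof -
  have "h / (2 * lam) * (1 - lg) \<le> 1 * 1" using h_pos h_le lam_pos lg by (intro mult_mono) auto
  then show ?thesis by (simp add: kappa_def)
qed

lemma kappa_less_1: "kappa < 1"
  using h_pos lam_pos lg by (simp add: kappa_def)

lemma norm_center_le_kappa:
  assumes "Rg \<le> norm x"
  shows "norm (center x) \<le> kappa * norm x"
proof -
  define \<theta> where "\<theta> = h / (2 * lam)"
  have "\<theta> * norm (prox lam psi x) \<le> \<theta> * (lg * norm x)"
    using prox_growth[OF assms] h_pos lam_pos by (intro mult_left_mono) (auto simp: \<theta>_def)
  moreover have "kappa = 1 - \<theta> * (1 - lg)" by (simp add: kappa_def \<theta>_def)
  then have "kappa * norm x = (1 - \<theta>) * norm x + \<theta> * (lg * norm x)"
    unfolding \<open>kappa = 1 - \<theta> * (1 - lg)\<close> by (simp add: algebra_simps)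
  ultimately show ?thesis using norm_center_le[of x] by (simp add: \<theta>_def)
qed

lemma rejection_tendsto_0: "((\<lambda>x. 1 - (\<integral>y. k x y \<partial>lborel)) \<longlongrightarrow> 0) at_infinity"
proof -
  let ?tail = "\<lambda>x::'a. real DIM('a) * h / ((1 - kappa) * norm x)\<^sup>2"
  have "filterlim (\<lambda>x. (1 - kappa) * norm x) at_top at_infinity"
    using kappa_less_1 by (intro filterlim_tendsto_pos_mult_at_top[OF tendsto_const _ filterlim_norm_at_top]) simp
  then have "filterlim (\<lambda>x. ((1 - kappa) * norm x)\<^sup>2) at_top at_infinity"
    by (rule filterlim_pow_at_top[rotated]) simp
  then have "(?tail \<longlongrightarrow> 0) at_infinity"
    by (rule real_tendsto_divide_at_top[OF tendsto_const])
  then have upper_lim: "((\<lambda>x. (\<integral>y. indicator (sym_diff {y. dens y * q y x \<ge> dens x * q x y} {y. norm y \<le> norm x}) y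
        * q x y \<partial>lborel) + ?tail x) \<longlongrightarrow> 0) at_infinity"
    using tendsto_add[OF inwards] by simp
  have "eventually (\<lambda>x::'a. max Rg 1 \<le> norm x) at_infinity"
    unfolding eventually_at_infinity by blast
  then have upper: "eventually (\<lambda>x. 1 - (\<integral>y. k x y \<partial>lborel)
      \<le> (\<integral>y. indicator (sym_diff {y. dens y * q y x \<ge> dens x * q x y} {y. norm y \<le> norm x}) y
        * q x y \<partial>lborel) + ?tail x) at_infinity"
  proof (rule eventually_mono)
    fix x :: 'a assume x: "max Rg 1 \<le> norm x"
    have "(1 - kappa) * norm x \<le> norm x - norm (center x)"
      using norm_center_le_kappa[of x] x by (simp add: algebra_simps)
    moreover have "0 < (1 - kappa) * norm x" using kappa_less_1 x by (intro mult_pos_pos) auto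
    ultimately have "((1 - kappa) * norm x)\<^sup>2 \<le> (norm x - norm (center x))\<^sup>2"
      "0 < ((1 - kappa) * norm x)\<^sup>2" "norm (center x) < norm x"
      by (auto intro: power_mono)
    then have "real DIM('a) * h / (norm x - norm (center x))\<^sup>2 \<le> ?tail x"
      using h_pos by (intro divide_left_mono) auto
    then have "(\<integral>y. indicator {y. norm x < norm y} y * q x y \<partial>lborel) \<le> ?tail x"
      using integral_q_outside_le[OF \<open>norm (center x) < norm x\<close>] by linarith
    then show "1 - (\<integral>y. k x y \<partial>lborel) \<le> (\<integral>y. indicator (sym_diff {y. dens y * q y x \<ge> dens x * q x y}
        {y. norm y \<le> norm x}) y * q x y \<partial>lborel) + ?tail x"
      using rejection_le[of x] by linarith
  qed
  have "eventually (\<lambda>x. 0 \<le> 1 - (\<integral>y. k x y \<partial>lborel)) at_infinity"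
    using integral_k_le_1 by simp
  from tendsto_sandwich[OF this upper tendsto_const upper_lim] show ?thesis .
qed

lemma drift:
  "\<exists>gam Kc. 0 \<le> gam \<and> gam < 1 \<and> 0 < Kc \<and>
     (\<forall>x. (\<integral>y. k x y * (1 + norm y) \<partial>lborel) + (1 - (\<integral>y. k x y \<partial>lborel)) * (1 + norm x)
          \<le> gam * (1 + norm x) + Kc)"
proof -
  note \<kappa> = kappa_nonneg kappa_less_1
  define \<epsilon> where "\<epsilon> = (1 - kappa) / 2"
  have "eventually (\<lambda>x. 1 - (\<integral>y. k x y \<partial>lborel) < \<epsilon> \<and> Rg \<le> norm x) at_infinity"
    using order_tendstoD(2)[OF rejection_tendsto_0, of \<epsilon>] \<kappa>
    by (intro eventually_conj) (auto simp: \<epsilon>_def eventually_at_infinity)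
  then obtain b where b: "\<And>x. b \<le> norm x \<Longrightarrow> 1 - (\<integral>y. k x y \<partial>lborel) < \<epsilon> \<and> Rg \<le> norm x"
    unfolding eventually_at_infinity by blast
  define R where "R = max b 0"
  have R_nonneg: "0 \<le> R" by (simp add: R_def)
  define Kc where "Kc = 3 + 2 * R + norm (prox lam psi 0) + real DIM('a) * h"
  have "(\<integral>y. k x y * (1 + norm y) \<partial>lborel) + (1 - (\<integral>y. k x y \<partial>lborel)) * (1 + norm x)
      \<le> (kappa + \<epsilon>) * (1 + norm x) + Kc" for x
  proof -
    let ?lhs = "(\<integral>y. k x y * (1 + norm y) \<partial>lborel) + (1 - (\<integral>y. k x y \<partial>lborel)) * (1 + norm x)"
    have lhs_le: "?lhs \<le> 2 + norm (center x) + real DIM('a) * h + r * (1 + norm x)"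
      if "1 - (\<integral>y. k x y \<partial>lborel) \<le> r" for r
      using integral_k_norm_le[of x] that by (intro add_mono mult_right_mono) auto
    have "0 \<le> (kappa + \<epsilon>) * (1 + norm x)" using \<kappa> by (simp add: \<epsilon>_def)
    show ?thesis
    proof (cases "R \<le> norm x")
      case True
      then have "1 - (\<integral>y. k x y \<partial>lborel) \<le> \<epsilon>" "norm (center x) \<le> kappa * norm x"
        using b[of x] norm_center_le_kappa[of x] by (auto simp: R_def)
      moreover have "(kappa + \<epsilon>) * (1 + norm x) = kappa * norm x + \<epsilon> * (1 + norm x) + kappa"
        by (simp add: algebra_simps)
      ultimately show ?thesis
        using lhs_le[of \<epsilon>] \<kappa> R_nonneg norm_ge_zero[of "prox lam psi 0"] h_pos unfolding Kc_def
        by linarith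
    next
      case False
      have "1 - (\<integral>y. k x y \<partial>lborel) \<le> 1" using k_nonneg by simp
      from lhs_le[OF this] have "?lhs \<le> 2 + norm (center x) + real DIM('a) * h + (1 + norm x)" by simp
      then show ?thesis
        using norm_center_le_norm_prox_0[of x] False \<open>0 \<le> (kappa + \<epsilon>) * (1 + norm x)\<close>
        unfolding Kc_def by linarith
    qed
  qed
  moreover have "0 < Kc" unfolding Kc_def R_def using h_pos by (simp add: add_pos_nonneg)
  moreover have "0 \<le> kappa + \<epsilon>" "kappa + \<epsilon> < 1" using \<kappa> unfolding \<epsilon>_def by (simp_all add: field_simps)
  ultimately show ?thesis by blast
qed

lemma k_pos: "0 < k x y"
  unfolding mala_acc_def using q_pos[of x y] dens_q_pos[of x y] dens_q_pos[of y x] by simp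

lemma small_sublevel:
  "\<exists>\<delta> B. 0 < \<delta> \<and> B \<in> sets lborel \<and> 0 < measure lborel B \<and> emeasure lborel B < \<infinity>
     \<and> (\<forall>x. 1 + norm x \<le> R \<longrightarrow> (\<forall>y\<in>B. \<delta> \<le> k x y))"
proof -
  let ?S = "cball (0::'a) (max R 0) \<times> cball (0::'a) 1"
  have "continuous_on ?S (\<lambda>p. k (fst p) (snd p))"
    using continuous_on_k by (rule continuous_on_subset) simp
  moreover have "(0, 0) \<in> ?S" by simp
  ultimately have "\<exists>p\<in>?S. \<forall>p'\<in>?S. k (fst p) (snd p) \<le> k (fst p') (snd p')"
    by (intro continuous_attains_inf compact_Times compact_cball) auto
  then obtain p where p: "\<And>p'. p' \<in> ?S \<Longrightarrow> k (fst p) (snd p) \<le> k (fst p') (snd p')"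
    by blast
  show ?thesis
  proof (intro exI conjI allI impI ballI)
    show "0 < k (fst p) (snd p)" by (rule k_pos)
    show "cball 0 1 \<in> sets lborel" by simp
    show "0 < measure lborel (cball (0::'a) 1)" by (rule content_cball_pos) simp
    show "emeasure lborel (cball (0::'a) 1) < \<infinity>" by (rule emeasure_lborel_cball_finite)
    fix x y :: 'a assume "1 + norm x \<le> R" "y \<in> cball 0 1"
    then show "k (fst p) (snd p) \<le> k x y" using p[of "(x, y)"] by simp
  qed
qed

lemma geometrically_ergodic_mala:
  "geometrically_ergodic (mala_kernel_n lam psi h) (target_measure lam psi)"
proof -
  obtain gam Kc where gam: "0 \<le> gam" "gam < 1" and Kc: "0 < Kc"
    and drift: "\<And>x. (\<integral>y. k x y * (1 + norm y) \<partial>lborel) + (1 - (\<integral>y. k x y \<partial>lborel)) * (1 + norm x)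
                    \<le> gam * (1 + norm x) + Kc"
    using drift by blast
  interpret H: harris_chain "\<lambda>x y. k x y" "\<lambda>x. 1 + norm x" dens gam Kc
    using k_nonneg k_measurable integrable_k integral_k_le_1 integrable_k_norm drift gam Kc
      small_sublevel dens_pos dens_measurable integrable_dens integral_dens integrable_dens_norm
      detailed_balance
    by unfold_locales (auto intro: less_imp_le)
  have "mala_op lam psi h = H.P" by (simp add: fun_eq_iff mala_op_def H.P_def H.hold_def)
  then show ?thesis
    using H.geometrically_ergodic_P by (simp add: mala_kernel_n_def[abs_def] target_measure_def)
qed

end

lemma obtain_linear_bound_of_Limsup:
  fixes f :: "'a::real_normed_vector \<Rightarrow> 'b::real_normed_vector"
  assumes "Limsup at_infinity (\<lambda>x. ereal (norm (f x) / norm x)) = ereal l" "l < 1"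
  obtains c R where "0 \<le> c" "c < 1" "0 \<le> R" "\<And>x. R \<le> norm x \<Longrightarrow> norm (f x) \<le> c * norm x"
proof -
  define c where "c = (max l 0 + 1) / 2"
  have c: "0 \<le> c" "c < 1" "l < c" using assms(2) by (auto simp: c_def field_simps)
  have "eventually (\<lambda>x. ereal (norm (f x) / norm x) < ereal c) at_infinity"
    using assms(1) c(3) by (intro Limsup_lessD) simp
  then obtain b where b: "\<And>x. b \<le> norm x \<Longrightarrow> norm (f x) / norm x < c"
    unfolding eventually_at_infinity by auto
  have "norm (f x) \<le> c * norm x" if "max b 1 \<le> norm x" for x
  proof -
    have "0 < norm x" using that by linarith
    then show ?thesis using b[of x] that by (simp add: pos_divide_less_eq)
  qed
  then show ?thesis using c by (intro that[of c "max b 1"]) auto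
qed

theorem theorem5:
  fixes psi :: "'a::euclidean_space \<Rightarrow> ereal"
    and lam h l :: real
  assumes proper: "proper_fun psi"
    and closed: "closed_fun psi"
    and convex: "convex_fun psi"
    and bdd_below: "\<exists>m::real. \<forall>x. ereal m \<le> psi x"
    and integrable: "(\<integral>\<^sup>+ x. ennreal (exp_neg (psi x)) \<partial>lborel) < \<infinity>"
    and lam_pos: "lam > 0"
    and h_pos: "h > 0"
    and prox_growth: "
        Limsup at_infinity (\<lambda>x. ereal (norm (prox lam psi x) / norm x)) = ereal l"
    and l_lt1: "l < 1"
    and inwards: "((\<lambda>x. \<integral> y. indicator
            (sym_diff {y. target_dens lam psi y * mala_q lam psi h y x
                          \<ge> target_dens lam psi x * mala_q lam psi h x y}
                      {y. norm y \<le> norm x}) y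
            * mala_q lam psi h x y \<partial>lborel) \<longlongrightarrow> 0) at_infinity"
    and h_le: "h \<le> 2 * lam"
  shows "geometrically_ergodic (mala_kernel_n lam psi h) (target_measure lam psi)"
proof -
  obtain m where m: "\<And>x. ereal m \<le> psi x" using bdd_below by blast
  obtain lg Rg where "0 \<le> lg" "lg < 1" "0 \<le> Rg"
    and "\<And>x. Rg \<le> norm x \<Longrightarrow> norm (prox lam psi x) \<le> lg * norm x"
    using obtain_linear_bound_of_Limsup[OF prox_growth l_lt1] by blast
  then interpret mala psi lam m h Rg lg
    using proper closed convex m lam_pos h_pos h_le inwards by unfold_locales auto
  show ?thesis by (rule geometrically_ergodic_mala)
qed

end
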